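(* Let $E$ be a finite directed graph and let $R$ be a left (respectively right) noetherian ring. If $E$ satisfies Condition (NE), then $(L_R(E))_0$ is left (respectively right) noetherian as a ring.
   Context: A directed graph $E=(E^0,E^1,s,r)$ has vertex set $E^0$, edge set $E^1$, source and range maps $s,r$; finite means $E^0,E^1$ finite. A path is a sequence of edges $f_1\cdots f_n$ with $s(f_{i+1})=r(f_i)$, of length $n$; a cycle is a path with $s(f_1)=r(f_n)$ and $s(f_i)\neq s(f_1)$ for $2\le i\le n$; it has an exit if some edge $f$ satisfies $s(f)=s(f_i)$ for some $i$ with $f\neq f_i$. Condition (NE): no cycle has an exit. $L_R(E)$ is the $R$-algebra generated by $v\in E^0$, $f,f^*$ ($f\in E^1$), with $R$ commuting with generators, subject to $v_iv_j=\delta_{i,j}v_i$; $s(f)f=fr(f)=f$, $r(f)f^*=f^*s(f)=f^*$; $f^*f'=\delta_{f,f'}r(f)$; and $\sum_{s(f)=v}ff^*=v$ whenever $s^{-1}(v)$ is nonempty and finite. With $\alpha^*=f_n^*\cdots f_1^*$, every element is a finite sum $\sum r_i\alpha_i\beta_i^*$ ($r_i\in R$, $\alpha_i,\beta_i$ paths, vertices as length-0 paths); $(L_R(E))_0$ is the subring of such sums with $\mathrm{len}(\alpha_i)=\mathrm{len}(\beta_i)$ for all $i$. *)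

theory Defs
  imports "HOL-Algebra.QuotRing"
begin

definition finite_graph :: "'v set \<Rightarrow> 'e set \<Rightarrow> ('e \<Rightarrow> 'v) \<Rightarrow> ('e \<Rightarrow> 'v) \<Rightarrow> bool" where
  "finite_graph E0 E1 s r \<longleftrightarrow> finite E0 \<and> finite E1 \<and> s ` E1 \<subseteq> E0 \<and> r ` E1 \<subseteq> E0"

definition edge_path :: "'e set \<Rightarrow> ('e \<Rightarrow> 'v) \<Rightarrow> ('e \<Rightarrow> 'v) \<Rightarrow> 'e list \<Rightarrow> bool" where
  "edge_path E1 s r es \<longleftrightarrow> es \<noteq> [] \<and> set es \<subseteq> E1 \<and>
     (\<forall>i. Suc i < length es \<longrightarrow> s (es ! Suc i) = r (es ! i))"

definition is_cycle :: "'e set \<Rightarrow> ('e \<Rightarrow> 'v) \<Rightarrow> ('e \<Rightarrow> 'v) \<Rightarrow> 'e list \<Rightarrow> bool" where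
  "is_cycle E1 s r es \<longleftrightarrow> edge_path E1 s r es \<and> s (hd es) = r (last es) \<and>
     (\<forall>i. 1 \<le> i \<and> i < length es \<longrightarrow> s (es ! i) \<noteq> s (hd es))"

definition has_exit :: "'e set \<Rightarrow> ('e \<Rightarrow> 'v) \<Rightarrow> 'e list \<Rightarrow> bool" where
  "has_exit E1 s es \<longleftrightarrow> (\<exists>f\<in>E1. \<exists>i<length es. s f = s (es ! i) \<and> f \<noteq> es ! i)"

definition condition_NE :: "'e set \<Rightarrow> ('e \<Rightarrow> 'v) \<Rightarrow> ('e \<Rightarrow> 'v) \<Rightarrow> bool" where
  "condition_NE E1 s r \<longleftrightarrow> (\<forall>c. is_cycle E1 s r c \<longrightarrow> \<not> has_exit E1 s c)"

text \<open>Paths including length-0 paths (vertices): a pair (v, es) with v the source vertex.\<close>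
definition gpath :: "'v set \<Rightarrow> 'e set \<Rightarrow> ('e \<Rightarrow> 'v) \<Rightarrow> ('e \<Rightarrow> 'v) \<Rightarrow> 'v \<times> 'e list \<Rightarrow> bool" where
  "gpath E0 E1 s r p \<longleftrightarrow> (case p of (v, es) \<Rightarrow>
      v \<in> E0 \<and> (es = [] \<or> (edge_path E1 s r es \<and> v = s (hd es))))"

definition left_ideal :: "'a set \<Rightarrow> ('a, 'b) ring_scheme \<Rightarrow> bool" where
  "left_ideal I S \<longleftrightarrow> additive_subgroup I S \<and> (\<forall>a\<in>carrier S. \<forall>x\<in>I. a \<otimes>\<^bsub>S\<^esub> x \<in> I)"

definition right_ideal :: "'a set \<Rightarrow> ('a, 'b) ring_scheme \<Rightarrow> bool" where
  "right_ideal I S \<longleftrightarrow> additive_subgroup I S \<and> (\<forall>a\<in>carrier S. \<forall>x\<in>I. x \<otimes>\<^bsub>S\<^esub> a \<in> I)"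

definition left_noetherian :: "('a, 'b) ring_scheme \<Rightarrow> bool" where
  "left_noetherian S \<longleftrightarrow> ring S \<and>
     (\<forall>C :: nat \<Rightarrow> 'a set. (\<forall>n. left_ideal (C n) S) \<and> (\<forall>n. C n \<subseteq> C (Suc n))
         \<longrightarrow> (\<exists>N. \<forall>n\<ge>N. C n = C N))"

definition right_noetherian :: "('a, 'b) ring_scheme \<Rightarrow> bool" where
  "right_noetherian S \<longleftrightarrow> ring S \<and>
     (\<forall>C :: nat \<Rightarrow> 'a set. (\<forall>n. right_ideal (C n) S) \<and> (\<forall>n. C n \<subseteq> C (Suc n))
         \<longrightarrow> (\<exists>N. \<forall>n\<ge>N. C n = C N))"

datatype ('v, 'e) lgen = Vx 'v | Ed 'e | Gh 'e

text \<open>Finitely supported R-valued functions on words in the generators (the free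
  unital R-algebra with central coefficients), with convolution product.\<close>
definition free_alg :: "('r, 'm) ring_scheme \<Rightarrow> (('v, 'e) lgen list \<Rightarrow> 'r) ring" where
  "free_alg R = \<lparr> carrier = {f. (\<forall>w. f w \<in> carrier R) \<and> finite {w. f w \<noteq> \<zero>\<^bsub>R\<^esub>}},
      mult = (\<lambda>f g w. \<Oplus>\<^bsub>R\<^esub> i\<in>{..length w}. f (take i w) \<otimes>\<^bsub>R\<^esub> g (drop i w)),
      one = (\<lambda>w. if w = [] then \<one>\<^bsub>R\<^esub> else \<zero>\<^bsub>R\<^esub>),
      zero = (\<lambda>w. \<zero>\<^bsub>R\<^esub>),
      add = (\<lambda>f g w. f w \<oplus>\<^bsub>R\<^esub> g w) \<rparr>"

definition mon :: "('r, 'm) ring_scheme \<Rightarrow> ('v, 'e) lgen list \<Rightarrow> (('v, 'e) lgen list \<Rightarrow> 'r)" where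
  "mon R w = (\<lambda>u. if u = w then \<one>\<^bsub>R\<^esub> else \<zero>\<^bsub>R\<^esub>)"

text \<open>Since E is finite, L_R(E) is unital with
  identity the sum of the vertices; we work in the unital free algebra and add the
  relation 1 = sum of vertices, which yields the same ring.\<close>
definition lpa_rels :: "('r, 'm) ring_scheme \<Rightarrow> 'v set \<Rightarrow> 'e set \<Rightarrow> ('e \<Rightarrow> 'v) \<Rightarrow> ('e \<Rightarrow> 'v)
    \<Rightarrow> (('v, 'e) lgen list \<Rightarrow> 'r) set" where
  "lpa_rels R E0 E1 s r = (let A = free_alg R in
      {mon R [Vx u, Vx w] \<ominus>\<^bsub>A\<^esub> (if u = w then mon R [Vx u] else \<zero>\<^bsub>A\<^esub>) | u w. u \<in> E0 \<and> w \<in> E0}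
    \<union> {mon R [Vx (s f), Ed f] \<ominus>\<^bsub>A\<^esub> mon R [Ed f] | f. f \<in> E1}
    \<union> {mon R [Ed f, Vx (r f)] \<ominus>\<^bsub>A\<^esub> mon R [Ed f] | f. f \<in> E1}
    \<union> {mon R [Vx (r f), Gh f] \<ominus>\<^bsub>A\<^esub> mon R [Gh f] | f. f \<in> E1}
    \<union> {mon R [Gh f, Vx (s f)] \<ominus>\<^bsub>A\<^esub> mon R [Gh f] | f. f \<in> E1}
    \<union> {mon R [Gh f, Ed g] \<ominus>\<^bsub>A\<^esub> (if f = g then mon R [Vx (r f)] else \<zero>\<^bsub>A\<^esub>) | f g. f \<in> E1 \<and> g \<in> E1}
    \<union> {(\<Oplus>\<^bsub>A\<^esub> f\<in>{f \<in> E1. s f = v}. mon R [Ed f, Gh f]) \<ominus>\<^bsub>A\<^esub> mon R [Vx v]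
         | v. v \<in> E0 \<and> {f \<in> E1. s f = v} \<noteq> {} \<and> finite {f \<in> E1. s f = v}}
    \<union> {\<one>\<^bsub>A\<^esub> \<ominus>\<^bsub>A\<^esub> (\<Oplus>\<^bsub>A\<^esub> v\<in>E0. mon R [Vx v])})"

definition lpa_ideal where
  "lpa_ideal R E0 E1 s r = genideal (free_alg R) (lpa_rels R E0 E1 s r)"

definition LPA :: "('r, 'm) ring_scheme \<Rightarrow> 'v set \<Rightarrow> 'e set \<Rightarrow> ('e \<Rightarrow> 'v) \<Rightarrow> ('e \<Rightarrow> 'v)
    \<Rightarrow> (('v, 'e) lgen list \<Rightarrow> 'r) set ring" where
  "LPA R E0 E1 s r = free_alg R Quot lpa_ideal R E0 E1 s r"

definition path_word :: "'v \<times> 'e list \<Rightarrow> ('v, 'e) lgen list" where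
  "path_word p = (case p of (v, es) \<Rightarrow> if es = [] then [Vx v] else map Ed es)"

definition ghost_word :: "'v \<times> 'e list \<Rightarrow> ('v, 'e) lgen list" where
  "ghost_word p = (case p of (v, es) \<Rightarrow> if es = [] then [Vx v] else map Gh (rev es))"

text \<open>(L_R(E))_0: the classes of finite sums of r alpha beta* with len alpha = len beta.\<close>
definition LPA0_carrier :: "('r, 'm) ring_scheme \<Rightarrow> 'v set \<Rightarrow> 'e set \<Rightarrow> ('e \<Rightarrow> 'v) \<Rightarrow> ('e \<Rightarrow> 'v)
    \<Rightarrow> (('v, 'e) lgen list \<Rightarrow> 'r) set set" where
  "LPA0_carrier R E0 E1 s r =
     {lpa_ideal R E0 E1 s r +>\<^bsub>free_alg R\<^esub> x | x. x \<in> carrier (free_alg R) \<and>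
        (\<forall>w. x w \<noteq> \<zero>\<^bsub>R\<^esub> \<longrightarrow> (\<exists>\<alpha> \<beta>. gpath E0 E1 s r \<alpha> \<and> gpath E0 E1 s r \<beta> \<and>
             length (snd \<alpha>) = length (snd \<beta>) \<and> w = path_word \<alpha> @ ghost_word \<beta>))}"

definition LPA0 :: "('r, 'm) ring_scheme \<Rightarrow> 'v set \<Rightarrow> 'e set \<Rightarrow> ('e \<Rightarrow> 'v) \<Rightarrow> ('e \<Rightarrow> 'v)
    \<Rightarrow> (('v, 'e) lgen list \<Rightarrow> 'r) set ring" where
  "LPA0 R E0 E1 s r = (LPA R E0 E1 s r)\<lparr>carrier := LPA0_carrier R E0 E1 s r\<rparr>"

end

theory Submission
  imports Defs "HOL-Algebra.Subrings" "HOL-Algebra.UnivPoly"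
begin

text \<open>Under (NE) a path longer than \<open>|E\<^sup>0|\<close> ends by running around a cycle without exits,
  so its last edge \<open>e\<close> is the only edge leaving \<open>s(e)\<close> and (CK2) reads \<open>e e\<^sup>* = s(e)\<close>.
  Cancelling such last edges reduces every \<open>\<alpha>\<beta>\<^sup>*\<close> with \<open>|\<alpha>| = |\<beta>|\<close> to zero or to one
  with \<open>|\<alpha>| \<le> |E\<^sup>0|\<close>. Hence \<open>(L\<^sub>R(E))\<^sub>0\<close> is the image of a free \<open>R\<close>-module of finite
  rank under \<open>c \<mapsto> \<Sum> c\<^sub>\<alpha>\<^sub>\<beta> \<alpha>\<beta>\<^sup>*\<close>, a map compatible with scalars on either side;
  one-sided ideals of \<open>(L\<^sub>R(E))\<^sub>0\<close> pull back to submodules, and a free module of finite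
  rank over a noetherian ring is noetherian.\<close>

section \<open>Noetherian free modules\<close>

definition ascending_chain_condition :: "('a set \<Rightarrow> bool) \<Rightarrow> bool" where
  "ascending_chain_condition P \<longleftrightarrow>
     (\<forall>C. (\<forall>n. P (C n)) \<and> (\<forall>n. C n \<subseteq> C (Suc n)) \<longrightarrow> (\<exists>N. \<forall>n\<ge>N. C n = C N))"

lemma ascending_chain_conditionI:
  assumes "\<And>C. (\<And>n. P (C n)) \<Longrightarrow> (\<And>n. C n \<subseteq> C (Suc n)) \<Longrightarrow> \<exists>N. \<forall>n\<ge>N. C n = C N"
  shows "ascending_chain_condition P"
  using assms by (auto simp: ascending_chain_condition_def)

lemma ascending_chain_conditionD:
  assumes "ascending_chain_condition P" "\<And>n. P (C n)" "\<And>n. C n \<subseteq> C (Suc n)"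
  shows "\<exists>N. \<forall>n\<ge>N. C n = C N"
  using assms by (auto simp: ascending_chain_condition_def)

text \<open>Left and right ideals are the ideals for the actions \<open>\<lambda>a x. a \<otimes> x\<close> and \<open>\<lambda>a x. x \<otimes> a\<close>;
  treating the action as a parameter handles both sides at once.\<close>

definition act_ideal :: "('a, 'm) ring_scheme \<Rightarrow> ('a \<Rightarrow> 'a \<Rightarrow> 'a) \<Rightarrow> 'a set \<Rightarrow> bool" where
  "act_ideal R \<mu> I \<longleftrightarrow> additive_subgroup I R \<and> (\<forall>a\<in>carrier R. \<forall>x\<in>I. \<mu> a x \<in> I)"

lemma left_noetherian_iff:
  "left_noetherian S \<longleftrightarrow> ring S \<and> ascending_chain_condition (act_ideal S (\<otimes>\<^bsub>S\<^esub>))"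
  by (simp add: left_noetherian_def ascending_chain_condition_def act_ideal_def left_ideal_def[abs_def])

lemma right_noetherian_iff:
  "right_noetherian S \<longleftrightarrow> ring S \<and> ascending_chain_condition (act_ideal S (\<lambda>a x. x \<otimes>\<^bsub>S\<^esub> a))"
  by (simp add: right_noetherian_def ascending_chain_condition_def act_ideal_def right_ideal_def[abs_def])

definition vectors :: "('a, 'm) ring_scheme \<Rightarrow> 'x set \<Rightarrow> ('x \<Rightarrow> 'a) set" where
  "vectors R X = {c. (\<forall>m\<in>X. c m \<in> carrier R) \<and> (\<forall>m. m \<notin> X \<longrightarrow> c m = \<zero>\<^bsub>R\<^esub>)}"

definition act_submodule :: "('a, 'm) ring_scheme \<Rightarrow> ('a \<Rightarrow> 'a \<Rightarrow> 'a) \<Rightarrow> 'x set \<Rightarrow> ('x \<Rightarrow> 'a) set \<Rightarrow> bool" where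
  "act_submodule R \<mu> X N \<longleftrightarrow> N \<subseteq> vectors R X \<and> (\<lambda>_. \<zero>\<^bsub>R\<^esub>) \<in> N
     \<and> (\<forall>c\<in>N. \<forall>d\<in>N. (\<lambda>m. c m \<oplus>\<^bsub>R\<^esub> d m) \<in> N)
     \<and> (\<forall>c\<in>N. (\<lambda>m. \<ominus>\<^bsub>R\<^esub> c m) \<in> N)
     \<and> (\<forall>a\<in>carrier R. \<forall>c\<in>N. (\<lambda>m. \<mu> a (c m)) \<in> N)"

context ring
begin

lemma vectors_carrier: "c \<in> vectors R X \<Longrightarrow> c m \<in> carrier R"
  by (cases "m \<in> X") (auto simp: vectors_def)

lemma act_submodule_empty: "act_submodule R \<mu> {} N \<Longrightarrow> N = {\<lambda>_. \<zero>}"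
  by (auto simp: act_submodule_def vectors_def)

lemma act_submodule_kernel:
  assumes N: "act_submodule R \<mu> (insert a X) N" and \<mu>0: "\<And>b. b \<in> carrier R \<Longrightarrow> \<mu> b \<zero> = \<zero>"
  shows "act_submodule R \<mu> X {c \<in> N. c a = \<zero>}"
  unfolding act_submodule_def
proof (intro conjI ballI)
  have "c \<in> vectors R X" if "c \<in> N" "c a = \<zero>" for c
  proof -
    have "c \<in> vectors R (insert a X)" using that(1) N by (auto simp: act_submodule_def)
    then show ?thesis using that(2) by (auto simp: vectors_def)
  qed
  then show "{c \<in> N. c a = \<zero>} \<subseteq> vectors R X" by blast
qed (use N \<mu>0 in \<open>simp_all add: act_submodule_def\<close>)

lemma act_ideal_coordinate_image:
  assumes N: "act_submodule R \<mu> X N"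
  shows "act_ideal R \<mu> ((\<lambda>c. c a) ` N)"
proof -
  have cl: "(\<lambda>m. \<ominus> c m) \<in> N" "(\<lambda>m. c m \<oplus> d m) \<in> N" "b \<in> carrier R \<Longrightarrow> (\<lambda>m. \<mu> b (c m)) \<in> N"
    if "c \<in> N" "d \<in> N" for b c d
    using that N by (auto simp: act_submodule_def)
  have "additive_subgroup ((\<lambda>c. c a) ` N) R"
    unfolding additive_subgroup_def
  proof (rule add.subgroupI, goal_cases)
    case 1
    show ?case using N vectors_carrier by (fastforce simp: act_submodule_def)
  next
    case 2
    show ?case using N by (auto simp: act_submodule_def)
  next
    case (3 x)
    then obtain c where c: "c \<in> N" "x = c a" by blast
    show ?case
      unfolding a_inv_def[symmetric] using cl(1)[OF c(1) c(1)] by (rule rev_image_eqI) (simp add: c)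
  next
    case (4 x y)
    then obtain c d where c: "c \<in> N" "x = c a" and d: "d \<in> N" "y = d a" by blast
    show ?case using cl(2)[OF c(1) d(1)] by (rule rev_image_eqI) (simp add: c d)
  qed
  moreover have "\<mu> b x \<in> (\<lambda>c. c a) ` N" if b: "b \<in> carrier R" and x: "x \<in> (\<lambda>c. c a) ` N" for b x
  proof -
    obtain c where c: "c \<in> N" "x = c a" using x by blast
    show ?thesis using cl(3)[OF c(1) c(1) b] by (rule rev_image_eqI) (simp add: c)
  qed
  ultimately show ?thesis by (simp add: act_ideal_def)
qed

text \<open>The short five lemma for \<open>0 \<rightarrow> ker \<rightarrow> N \<rightarrow> R\<close>, the last map being evaluation at \<open>a\<close>.\<close>

lemma act_submodule_eq_by_kernel_image:
  assumes N: "act_submodule R \<mu> X N" and N': "act_submodule R \<mu> X N'" and sub: "N' \<subseteq> N"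
    and ker: "{c \<in> N. c a = \<zero>} = {c \<in> N'. c a = \<zero>}"
    and img: "(\<lambda>c. c a) ` N = (\<lambda>c. c a) ` N'"
  shows "N = N'"
proof
  show "N \<subseteq> N'"
  proof
    fix c assume c: "c \<in> N"
    have "c a \<in> (\<lambda>c. c a) ` N'" unfolding img[symmetric] using c by (rule imageI)
    then obtain d where d: "d \<in> N'" "d a = c a" by (auto elim: imageE)
    define e where "e = (\<lambda>m. c m \<oplus> \<ominus> d m)"
    have cd: "c m \<in> carrier R" "d m \<in> carrier R" for m
      using c d(1) sub N by (auto simp: act_submodule_def intro: vectors_carrier)
    have "e \<in> N" using c d(1) sub N by (auto simp: act_submodule_def e_def)
    moreover have "e a = \<zero>" using cd d(2) by (simp add: e_def r_neg)
    ultimately have "e \<in> N'" using ker by blast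
    moreover have "c = (\<lambda>m. e m \<oplus> d m)" using cd by (auto simp: e_def a_assoc l_neg)
    ultimately show "c \<in> N'" using d(1) N' by (auto simp: act_submodule_def)
  qed
qed (rule sub)

lemma acc_act_submodules:
  assumes "finite X" and \<mu>0: "\<And>b. b \<in> carrier R \<Longrightarrow> \<mu> b \<zero> = \<zero>"
    and acc: "ascending_chain_condition (act_ideal R \<mu>)"
  shows "ascending_chain_condition (act_submodule R \<mu> X)"
  using assms(1)
proof (induction X rule: finite_induct)
  case empty
  show ?case by (rule ascending_chain_conditionI) (use act_submodule_empty in metis)
next
  case (insert a X)
  show ?case
  proof (rule ascending_chain_conditionI)
    fix C assume C: "\<And>n. act_submodule R \<mu> (insert a X) (C n)" and mono: "\<And>n. C n \<subseteq> C (Suc n)"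
    have mono': "C m \<subseteq> C n" if "m \<le> n" for m n using lift_Suc_mono_le[of C, OF mono that] .
    obtain N1 where N1: "\<forall>n\<ge>N1. {c \<in> C n. c a = \<zero>} = {c \<in> C N1. c a = \<zero>}"
      using ascending_chain_conditionD[OF insert.IH, of "\<lambda>n. {c \<in> C n. c a = \<zero>}"]
        act_submodule_kernel[OF C \<mu>0] mono by blast
    obtain N2 where N2: "\<forall>n\<ge>N2. (\<lambda>c. c a) ` C n = (\<lambda>c. c a) ` C N2"
      using ascending_chain_conditionD[OF acc, of "\<lambda>n. (\<lambda>c. c a) ` C n"]
        act_ideal_coordinate_image[OF C] mono by blast
    have "C n = C (max N1 N2)" if "n \<ge> max N1 N2" for n
    proof (rule act_submodule_eq_by_kernel_image[OF C C mono'[OF that]])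
      have le: "n \<ge> N1" "n \<ge> N2" "max N1 N2 \<ge> N1" "max N1 N2 \<ge> N2" using that by auto
      show "{c \<in> C n. c a = \<zero>} = {c \<in> C (max N1 N2). c a = \<zero>}"
        using N1[rule_format, OF le(1)] N1[rule_format, OF le(3)] by (rule trans[OF _ sym])
      show "(\<lambda>c. c a) ` C n = (\<lambda>c. c a) ` C (max N1 N2)"
        using N2[rule_format, OF le(2)] N2[rule_format, OF le(4)] by (rule trans[OF _ sym])
    qed
    then show "\<exists>N. \<forall>n\<ge>N. C n = C N" by blast
  qed
qed

end

section \<open>The free algebra on the generators\<close>

lemma free_alg_simps:
  "carrier (free_alg R) = {f. (\<forall>w. f w \<in> carrier R) \<and> finite {w. f w \<noteq> \<zero>\<^bsub>R\<^esub>}}"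
  "mult (free_alg R) = (\<lambda>f g w. \<Oplus>\<^bsub>R\<^esub> i\<in>{..length w}. f (take i w) \<otimes>\<^bsub>R\<^esub> g (drop i w))"
  "one (free_alg R) = (\<lambda>w. if w = [] then \<one>\<^bsub>R\<^esub> else \<zero>\<^bsub>R\<^esub>)"
  "zero (free_alg R) = (\<lambda>w. \<zero>\<^bsub>R\<^esub>)"
  "add (free_alg R) = (\<lambda>f g w. f w \<oplus>\<^bsub>R\<^esub> g w)"
  by (simp_all add: free_alg_def)

context abelian_monoid
begin

lemma finsum_eq_single:
  assumes "i \<in> A" "finite A" "\<And>j. j \<in> A \<Longrightarrow> j \<noteq> i \<Longrightarrow> f j = \<zero>" "f \<in> A \<rightarrow> carrier G"
  shows "finsum G f A = f i"
proof -
  have "finsum G f A = (\<Oplus>j\<in>A. if i = j then f j else \<zero>)"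
    by (rule finsum_cong') (use assms in auto)
  also have "\<dots> = f i" by (rule finsum_singleton) (use assms in auto)
  finally show ?thesis .
qed

lemma finsum_triangle_swap:
  assumes F: "\<And>i j. F i j \<in> carrier G"
  shows "(\<Oplus>i\<in>{..n::nat}. \<Oplus>j\<in>{..i}. F i j) = (\<Oplus>j\<in>{..n}. \<Oplus>i\<in>{j..n}. F i j)"
proof (induction n)
  case 0
  then show ?case by (simp add: F)
next
  case (Suc n)
  have ins: "\<And>j. j \<le> Suc n \<Longrightarrow> {j..Suc n} = insert (Suc n) {j..n}" by auto
  have "(\<Oplus>j\<in>{..Suc n}. \<Oplus>i\<in>{j..Suc n}. F i j) = (\<Oplus>j\<in>{..Suc n}. F (Suc n) j \<oplus> (\<Oplus>i\<in>{j..n}. F i j))"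
    by (rule finsum_cong) (auto simp: ins F Pi_def)
  also have "\<dots> = (\<Oplus>j\<in>{..Suc n}. F (Suc n) j) \<oplus> (\<Oplus>j\<in>{..n}. \<Oplus>i\<in>{j..n}. F i j)"
    by (simp add: finsum_addf F Pi_def)
  finally show ?case using Suc by (simp add: F Pi_def)
qed

end

definition smon :: "('r, 'm) ring_scheme \<Rightarrow> 'r \<Rightarrow> ('v, 'e) lgen list \<Rightarrow> (('v, 'e) lgen list \<Rightarrow> 'r)" where
  "smon R c u = (\<lambda>w. if w = u then c else \<zero>\<^bsub>R\<^esub>)"

lemma mon_eq_smon: "mon R w = smon R \<one>\<^bsub>R\<^esub> w"
  by (simp add: mon_def smon_def)

context ring
begin

abbreviation FA where "FA \<equiv> free_alg R"

lemma free_alg_carrierI: "(\<And>w. f w \<in> carrier R) \<Longrightarrow> finite {w. f w \<noteq> \<zero>} \<Longrightarrow> f \<in> carrier FA"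
  by (simp add: free_alg_simps)

lemma free_alg_carrierD:
  assumes "f \<in> carrier FA" shows "f w \<in> carrier R" and "finite {w. f w \<noteq> \<zero>}"
  using assms by (simp_all add: free_alg_simps)

lemma free_alg_mult: "(f \<otimes>\<^bsub>FA\<^esub> g) w = (\<Oplus> i\<in>{..length w}. f (take i w) \<otimes> g (drop i w))"
  and free_alg_add: "(f \<oplus>\<^bsub>FA\<^esub> g) w = f w \<oplus> g w"
  and free_alg_zero: "\<zero>\<^bsub>FA\<^esub> = (\<lambda>w. \<zero>)"
  and free_alg_one: "\<one>\<^bsub>FA\<^esub> = (\<lambda>w. if w = [] then \<one> else \<zero>)"
  by (simp_all add: free_alg_simps)

lemma free_alg_mult_closed:
  assumes f: "f \<in> carrier FA" and g: "g \<in> carrier FA"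
  shows "f \<otimes>\<^bsub>FA\<^esub> g \<in> carrier FA"
proof (rule free_alg_carrierI)
  note cf = free_alg_carrierD[OF f] and cg = free_alg_carrierD[OF g]
  show "(f \<otimes>\<^bsub>FA\<^esub> g) w \<in> carrier R" for w
    by (simp add: free_alg_mult Pi_def cf cg)
  let ?Sf = "{w. f w \<noteq> \<zero>}" and ?Sg = "{w. g w \<noteq> \<zero>}"
  have "{w. (f \<otimes>\<^bsub>FA\<^esub> g) w \<noteq> \<zero>} \<subseteq> (\<lambda>(u,v). u @ v) ` (?Sf \<times> ?Sg)"
  proof
    fix w assume "w \<in> {w. (f \<otimes>\<^bsub>FA\<^esub> g) w \<noteq> \<zero>}"
    then have "\<not> (\<forall>i\<in>{..length w}. f (take i w) \<otimes> g (drop i w) = \<zero>)"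
      using add.finprod_one_eqI by (force simp: free_alg_mult)
    then obtain i where "f (take i w) \<otimes> g (drop i w) \<noteq> \<zero>" by auto
    then have "f (take i w) \<noteq> \<zero>" "g (drop i w) \<noteq> \<zero>" using cf cg by auto
    then show "w \<in> (\<lambda>(u,v). u @ v) ` (?Sf \<times> ?Sg)"
      by (intro image_eqI[of _ _ "(take i w, drop i w)"]) auto
  qed
  then show "finite {w. (f \<otimes>\<^bsub>FA\<^esub> g) w \<noteq> \<zero>}"
    using cf cg by (auto intro: finite_subset)
qed

lemma free_alg_mult_assoc:
  fixes f g h :: "('v,'e) lgen list \<Rightarrow> 'a"
  assumes f: "f \<in> carrier FA" and g: "g \<in> carrier FA" and h: "h \<in> carrier FA"
  shows "(f \<otimes>\<^bsub>FA\<^esub> g) \<otimes>\<^bsub>FA\<^esub> h = f \<otimes>\<^bsub>FA\<^esub> (g \<otimes>\<^bsub>FA\<^esub> h)"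
proof
  fix w :: "('v,'e) lgen list"
  let ?n = "length w"
  note cf = free_alg_carrierD(1)[OF f] and cg = free_alg_carrierD(1)[OF g]
    and ch = free_alg_carrierD(1)[OF h]
  define F where "F i j = f (take j w) \<otimes> g (take (i - j) (drop j w)) \<otimes> h (drop i w)" for i j
  have Fc: "\<And>i j. F i j \<in> carrier R" by (simp add: F_def cf cg ch)
  have "((f \<otimes>\<^bsub>FA\<^esub> g) \<otimes>\<^bsub>FA\<^esub> h) w
      = (\<Oplus>i\<in>{..?n}. (\<Oplus>j\<in>{..i}. f (take j w) \<otimes> g (take (i - j) (drop j w))) \<otimes> h (drop i w))"
    unfolding free_alg_mult
  proof (rule finsum_cong')
    fix i assume i: "i \<in> {..?n}"
    have "(\<Oplus>j\<in>{..length (take i w)}. f (take j (take i w)) \<otimes> g (drop j (take i w)))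
        = (\<Oplus>j\<in>{..i}. f (take j w) \<otimes> g (take (i - j) (drop j w)))"
      by (rule finsum_cong') (use i in \<open>auto simp: Pi_def cf cg min_def drop_take\<close>)
    then show "(\<Oplus>j\<in>{..length (take i w)}. f (take j (take i w)) \<otimes> g (drop j (take i w))) \<otimes> h (drop i w)
      = (\<Oplus>j\<in>{..i}. f (take j w) \<otimes> g (take (i - j) (drop j w))) \<otimes> h (drop i w)" by simp
  qed (auto simp: Pi_def cf cg ch intro!: finsum_closed)
  also have "\<dots> = (\<Oplus>i\<in>{..?n}. \<Oplus>j\<in>{..i}. F i j)"
    by (rule finsum_cong')
       (auto simp: Pi_def cf cg ch F_def Fc finsum_ldistr[OF _ ch] intro!: finsum_closed)
  also have "\<dots> = (\<Oplus>j\<in>{..?n}. \<Oplus>i\<in>{j..?n}. F i j)" by (rule finsum_triangle_swap[OF Fc])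
  also have "\<dots> = (\<Oplus>j\<in>{..?n}. \<Oplus>k\<in>{..?n - j}. F (j + k) j)"
  proof (rule finsum_cong')
    fix j assume j: "j \<in> {..?n}"
    have "(\<lambda>k. j + k) ` {..?n - j} = {j..?n}" using j
      by (auto simp: image_iff) (metis atMost_iff diff_le_mono le_add_diff_inverse)
    moreover have "(\<Oplus>k\<in>{..?n - j}. F (j + k) j) = (\<Oplus>i\<in>(\<lambda>k. j + k) ` {..?n - j}. F i j)"
      by (rule finsum_reindex[symmetric, where f = "\<lambda>i. F i j", simplified o_def])
         (auto simp: Fc inj_on_def)
    ultimately show "(\<Oplus>i\<in>{j..?n}. F i j) = (\<Oplus>k\<in>{..?n - j}. F (j + k) j)" by simp
  qed (auto simp: Pi_def Fc intro!: finsum_closed)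
  also have "\<dots> = (\<Oplus>j\<in>{..?n}. f (take j w) \<otimes>
      (\<Oplus>k\<in>{..?n - j}. g (take k (drop j w)) \<otimes> h (drop k (drop j w))))"
    by (rule finsum_cong')
       (auto simp: Pi_def cf cg ch F_def finsum_rdistr[OF _ cf] m_assoc drop_drop add.commute
             intro!: finsum_cong' finsum_closed)
  also have "\<dots> = (f \<otimes>\<^bsub>FA\<^esub> (g \<otimes>\<^bsub>FA\<^esub> h)) w"
    unfolding free_alg_mult by simp
  finally show "((f \<otimes>\<^bsub>FA\<^esub> g) \<otimes>\<^bsub>FA\<^esub> h) w = (f \<otimes>\<^bsub>FA\<^esub> (g \<otimes>\<^bsub>FA\<^esub> h)) w" .
qed

lemma free_alg_l_one:
  assumes f: "f \<in> carrier FA"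
  shows "\<one>\<^bsub>FA\<^esub> \<otimes>\<^bsub>FA\<^esub> f = f"
proof
  fix w
  have "(\<one>\<^bsub>FA\<^esub> \<otimes>\<^bsub>FA\<^esub> f) w
      = (\<Oplus> i\<in>{..length w}. (if take i w = [] then \<one> else \<zero>) \<otimes> f (drop i w))"
    by (simp add: free_alg_mult free_alg_one)
  also have "\<dots> = (if take 0 w = [] then \<one> else \<zero>) \<otimes> f (drop 0 w)"
    by (rule finsum_eq_single) (auto simp: free_alg_carrierD[OF f])
  finally show "(\<one>\<^bsub>FA\<^esub> \<otimes>\<^bsub>FA\<^esub> f) w = f w" by (simp add: free_alg_carrierD[OF f])
qed

lemma free_alg_r_one:
  assumes f: "f \<in> carrier FA"
  shows "f \<otimes>\<^bsub>FA\<^esub> \<one>\<^bsub>FA\<^esub> = f"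
proof
  fix w
  have "(f \<otimes>\<^bsub>FA\<^esub> \<one>\<^bsub>FA\<^esub>) w
      = (\<Oplus> i\<in>{..length w}. f (take i w) \<otimes> (if drop i w = [] then \<one> else \<zero>))"
    by (simp add: free_alg_mult free_alg_one)
  also have "\<dots> = f (take (length w) w) \<otimes> (if drop (length w) w = [] then \<one> else \<zero>)"
    by (rule finsum_eq_single) (auto simp: free_alg_carrierD[OF f])
  finally show "(f \<otimes>\<^bsub>FA\<^esub> \<one>\<^bsub>FA\<^esub>) w = f w" by (simp add: free_alg_carrierD[OF f])
qed

lemma free_alg_add_closed:
  assumes f: "f \<in> carrier FA" and g: "g \<in> carrier FA"
  shows "f \<oplus>\<^bsub>FA\<^esub> g \<in> carrier FA"
proof (rule free_alg_carrierI)
  note cf = free_alg_carrierD[OF f] and cg = free_alg_carrierD[OF g]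
  show "(f \<oplus>\<^bsub>FA\<^esub> g) w \<in> carrier R" for w by (simp add: free_alg_add cf cg)
  have "{w. (f \<oplus>\<^bsub>FA\<^esub> g) w \<noteq> \<zero>} \<subseteq> {w. f w \<noteq> \<zero>} \<union> {w. g w \<noteq> \<zero>}"
    using cg by (auto simp: free_alg_add)
  then show "finite {w. (f \<oplus>\<^bsub>FA\<^esub> g) w \<noteq> \<zero>}"
    using cf cg finite_subset by blast
qed

lemma free_alg_abelian_group: "abelian_group (FA :: (('v,'e) lgen list \<Rightarrow> 'a) ring)"
proof (rule abelian_groupI)
  fix x :: "('v,'e) lgen list \<Rightarrow> 'a" assume x: "x \<in> carrier FA"
  note cx = free_alg_carrierD[OF x]
  have "(\<lambda>w. \<ominus> x w) \<in> carrier FA"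
    using cx by (intro free_alg_carrierI) (auto simp: minus_equality)
  moreover have "(\<lambda>w. \<ominus> x w) \<oplus>\<^bsub>FA\<^esub> x = \<zero>\<^bsub>FA\<^esub>"
    by (rule ext) (simp add: free_alg_add free_alg_zero cx l_neg)
  ultimately show "\<exists>y\<in>carrier FA. y \<oplus>\<^bsub>FA\<^esub> x = \<zero>\<^bsub>FA\<^esub>" by blast
qed (auto simp: free_alg_add_closed free_alg_add free_alg_zero free_alg_carrierD a_ac
      intro!: free_alg_carrierI ext)

lemma free_alg_ring: "ring (FA :: (('v,'e) lgen list \<Rightarrow> 'a) ring)"
proof (rule ringI)
  show "abelian_group FA" by (rule free_alg_abelian_group)
  have "\<one>\<^bsub>FA\<^esub> \<in> carrier FA"
    by (rule free_alg_carrierI) (auto simp: free_alg_one intro: finite_subset[of _ "{[]}"])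
  then show "monoid FA"
    by (intro monoidI) (auto simp: free_alg_mult_closed free_alg_mult_assoc free_alg_l_one free_alg_r_one)
next
  fix x y z :: "('v,'e) lgen list \<Rightarrow> 'a"
  assume x: "x \<in> carrier FA" and y: "y \<in> carrier FA" and z: "z \<in> carrier FA"
  note c = free_alg_carrierD(1)[OF x] free_alg_carrierD(1)[OF y] free_alg_carrierD(1)[OF z]
  show "(x \<oplus>\<^bsub>FA\<^esub> y) \<otimes>\<^bsub>FA\<^esub> z = x \<otimes>\<^bsub>FA\<^esub> z \<oplus>\<^bsub>FA\<^esub> y \<otimes>\<^bsub>FA\<^esub> z"
    and "z \<otimes>\<^bsub>FA\<^esub> (x \<oplus>\<^bsub>FA\<^esub> y) = z \<otimes>\<^bsub>FA\<^esub> x \<oplus>\<^bsub>FA\<^esub> z \<otimes>\<^bsub>FA\<^esub> y"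
    by (rule ext; simp add: free_alg_add free_alg_mult c l_distr r_distr finsum_addf Pi_def)+
qed

lemma smon_carrier: "c \<in> carrier R \<Longrightarrow> smon R c u \<in> carrier FA"
  by (rule free_alg_carrierI) (auto simp: smon_def intro: finite_subset[of _ "{u}"])

lemma mon_carrier: "mon R u \<in> carrier FA"
  by (simp add: mon_eq_smon smon_carrier)

lemma smon_mult:
  fixes u v :: "('v,'e) lgen list"
  assumes c: "c \<in> carrier R" and d: "d \<in> carrier R"
  shows "smon R c u \<otimes>\<^bsub>FA\<^esub> smon R d v = smon R (c \<otimes> d) (u @ v)"
proof
  fix w
  have "(smon R c u \<otimes>\<^bsub>FA\<^esub> smon R d v) w = (\<Oplus>i\<in>{..length w}. smon R c u (take i w) \<otimes> smon R d v (drop i w))"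
    by (simp add: free_alg_mult)
  also have "\<dots> = smon R (c \<otimes> d) (u @ v) w"
  proof (cases "w = u @ v")
    case True
    have "(\<Oplus>i\<in>{..length w}. smon R c u (take i w) \<otimes> smon R d v (drop i w))
        = smon R c u (take (length u) w) \<otimes> smon R d v (drop (length u) w)"
      by (rule finsum_eq_single) (use True c d in \<open>auto simp: smon_def dest: arg_cong[of _ _ length]\<close>)
    then show ?thesis using True by (simp add: smon_def)
  next
    case False
    have "(\<Oplus>i\<in>{..length w}. smon R c u (take i w) \<otimes> smon R d v (drop i w)) = \<zero>"
      by (rule add.finprod_one_eqI) (use False c d in \<open>auto simp: smon_def\<close>)
    then show ?thesis using False by (simp add: smon_def)
  qed
  finally show "(smon R c u \<otimes>\<^bsub>FA\<^esub> smon R d v) w = smon R (c \<otimes> d) (u @ v) w" .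
qed

lemma mon_mult: "mon R u \<otimes>\<^bsub>FA\<^esub> mon R v = mon R (u @ v)"
  by (simp add: mon_eq_smon smon_mult)

lemma smon_add: "c \<in> carrier R \<Longrightarrow> d \<in> carrier R \<Longrightarrow> smon R c u \<oplus>\<^bsub>FA\<^esub> smon R d u = smon R (c \<oplus> d) u"
  by (rule ext) (simp add: smon_def free_alg_add)

lemma smon_zero: "smon R \<zero> u = \<zero>\<^bsub>FA\<^esub>"
  by (rule ext) (simp add: smon_def free_alg_zero)

lemma smon_eq_scalar_mult:
  assumes "c \<in> carrier R"
  shows "smon R c u = smon R c [] \<otimes>\<^bsub>FA\<^esub> mon R u" and "smon R c u = mon R u \<otimes>\<^bsub>FA\<^esub> smon R c []"
  using assms by (simp_all add: mon_eq_smon smon_mult)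

lemma free_alg_finsum_apply:
  fixes F :: "'i \<Rightarrow> ('v,'e) lgen list \<Rightarrow> 'a"
  assumes "finite A" "F \<in> A \<rightarrow> carrier FA"
  shows "(finsum FA F A) w = (\<Oplus>i\<in>A. F i w)"
  using assms
proof (induction A rule: finite_induct)
  interpret FA: abelian_group FA by (rule free_alg_abelian_group)
  case empty
  then show ?case by (simp add: free_alg_zero)
next
  interpret FA: abelian_group FA by (rule free_alg_abelian_group)
  case (insert a A)
  have "finsum FA F (insert a A) = F a \<oplus>\<^bsub>FA\<^esub> finsum FA F A"
    using insert by (intro FA.finsum_insert) auto
  then show ?case using insert by (simp add: free_alg_add free_alg_carrierD Pi_def)
qed

lemma free_alg_smon_expansion:
  fixes x :: "('v,'e) lgen list \<Rightarrow> 'a"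
  assumes x: "x \<in> carrier FA"
  shows "x = finsum FA (\<lambda>u. smon R (x u) u) {u. x u \<noteq> \<zero>}"
proof
  fix w
  note cx = free_alg_carrierD[OF x]
  have "(finsum FA (\<lambda>u. smon R (x u) u) {u. x u \<noteq> \<zero>}) w = (\<Oplus>u\<in>{u. x u \<noteq> \<zero>}. smon R (x u) u w)"
    by (rule free_alg_finsum_apply) (auto simp: cx smon_carrier)
  also have "\<dots> = x w"
  proof (cases "x w = \<zero>")
    case True
    then show ?thesis by (auto simp: smon_def intro: add.finprod_one_eqI)
  next
    case False
    have "(\<Oplus>u\<in>{u. x u \<noteq> \<zero>}. smon R (x u) u w) = smon R (x w) w w"
      by (rule finsum_eq_single) (use False cx in \<open>auto simp: smon_def\<close>)
    then show ?thesis by (simp add: smon_def)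
  qed
  finally show "x w = (finsum FA (\<lambda>u. smon R (x u) u) {u. x u \<noteq> \<zero>}) w" by simp
qed

end

section \<open>Paths\<close>

lemma edge_path_Cons:
  "edge_path E1 s r (e # es) \<longleftrightarrow> e \<in> E1 \<and> (es = [] \<or> (edge_path E1 s r es \<and> s (hd es) = r e))"
proof (cases es)
  case (Cons x xs)
  have "(\<forall>i. Suc i < length (e # es) \<longrightarrow> s ((e # es) ! Suc i) = r ((e # es) ! i))
      \<longleftrightarrow> s x = r e \<and> (\<forall>i. Suc i < length es \<longrightarrow> s (es ! Suc i) = r (es ! i))"
    using Cons by (auto simp: less_Suc_eq_0_disj)
  then show ?thesis using Cons by (auto simp: edge_path_def)
qed (simp add: edge_path_def)

lemma edge_path_append_iff:
  assumes "xs \<noteq> []" "ys \<noteq> []"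
  shows "edge_path E1 s r (xs @ ys) \<longleftrightarrow>
    edge_path E1 s r xs \<and> edge_path E1 s r ys \<and> s (hd ys) = r (last xs)"
  using assms(1)
proof (induction xs)
  case (Cons x xs)
  then show ?case using assms(2) by (cases "xs = []") (auto simp: edge_path_Cons)
qed simp

lemma gpath_simp:
  "gpath E0 E1 s r (v, es) \<longleftrightarrow> v \<in> E0 \<and> (es = [] \<or> (edge_path E1 s r es \<and> v = s (hd es)))"
  by (simp add: gpath_def)

definition path_range :: "('e \<Rightarrow> 'v) \<Rightarrow> 'v \<times> 'e list \<Rightarrow> 'v" where
  "path_range r p = (if snd p = [] then fst p else r (last (snd p)))"

lemma gpath_concat:
  assumes "gpath E0 E1 s r p" "gpath E0 E1 s r q" "path_range r p = fst q"
  shows "gpath E0 E1 s r (fst p, snd p @ snd q)"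
proof -
  obtain v as u cs where p: "p = (v, as)" and q: "q = (u, cs)" by (cases p, cases q)
  show ?thesis
  proof (cases "as = [] \<or> cs = []")
    case False
    then show ?thesis
      using assms edge_path_append_iff[of as cs E1 s r] by (auto simp: p q gpath_simp path_range_def)
  qed (use assms p q in \<open>auto simp: path_range_def\<close>)
qed

lemma gpath_snocD:
  assumes "gpath E0 E1 s r (v, as @ [l])"
  shows "gpath E0 E1 s r (v, as)" and "l \<in> E1" and "path_range r (v, as) = s l"
proof -
  have ep: "edge_path E1 s r (as @ [l])" and v: "v \<in> E0" "v = s (hd (as @ [l]))"
    using assms by (auto simp: gpath_simp)
  show "l \<in> E1" using ep by (auto simp: edge_path_def)
  show "gpath E0 E1 s r (v, as)" and "path_range r (v, as) = s l"
    using ep v edge_path_append_iff[of as "[l]" E1 s r]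
    by (cases "as = []"; auto simp: gpath_simp path_range_def)+
qed

definition path_vertex :: "('e \<Rightarrow> 'v) \<Rightarrow> ('e \<Rightarrow> 'v) \<Rightarrow> 'e list \<Rightarrow> nat \<Rightarrow> 'v" where
  "path_vertex s r es k = (if k < length es then s (es ! k) else r (last es))"

lemma path_vertex_Suc:
  assumes "edge_path E1 s r es" "k < length es"
  shows "path_vertex s r es (Suc k) = r (es ! k)"
proof (cases "Suc k < length es")
  case False
  then have "k = length es - 1" using assms(2) by simp
  then show ?thesis using False assms by (simp add: path_vertex_def last_conv_nth edge_path_def)
qed (use assms in \<open>auto simp: path_vertex_def edge_path_def\<close>)

lemma path_vertex_in:
  assumes "finite_graph E0 E1 s r" "edge_path E1 s r es"
  shows "path_vertex s r es k \<in> E0"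
proof -
  have "es ! k \<in> E1" if "k < length es" using assms(2) that by (auto simp: edge_path_def)
  moreover have "last es \<in> E1" using assms(2) last_in_set by (auto simp: edge_path_def)
  ultimately show ?thesis using assms(1) by (auto simp: path_vertex_def finite_graph_def)
qed

lemma cycle_segment:
  assumes ep: "edge_path E1 s r es" and ij: "i < j" "j \<le> length es"
    and ret: "path_vertex s r es i = path_vertex s r es j"
    and first: "\<And>k. i < k \<Longrightarrow> k < j \<Longrightarrow> path_vertex s r es k \<noteq> path_vertex s r es j"
  shows "is_cycle E1 s r (take (j - i) (drop i es))"
proof -
  define x where "x = path_vertex s r es"
  define c where "c = take (j - i) (drop i es)"
  have lc: "length c = j - i" and cne: "c \<noteq> []" using ij by (auto simp: c_def)
  have cnth: "\<And>m. m < j - i \<Longrightarrow> c ! m = es ! (i + m)" using ij by (simp add: c_def)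
  have src: "s (c ! m) = x (i + m)" if "m < j - i" for m
  proof -
    have "i + m < length es" using that ij by linarith
    then show ?thesis using that by (simp add: cnth x_def path_vertex_def)
  qed
  have hd: "s (hd c) = x i" using src[of 0] ij by (simp add: hd_conv_nth[OF cne])
  show ?thesis
    unfolding is_cycle_def edge_path_def c_def[symmetric]
  proof (intro conjI allI impI)
    show "set c \<subseteq> E1" using ep by (auto simp: c_def edge_path_def dest: in_set_takeD in_set_dropD)
  next
    fix m assume "Suc m < length c"
    then show "s (c ! Suc m) = r (c ! m)" using ep ij lc cnth unfolding edge_path_def by auto
  next
    have "r (last c) = x j"
      using path_vertex_Suc[OF ep, of "j - 1"] cnth[of "j - i - 1"] ij lc
      by (simp add: last_conv_nth[OF cne] x_def)
    then show "s (hd c) = r (last c)" using hd ret by (simp add: x_def)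
  next
    fix m assume m: "1 \<le> m \<and> m < length c"
    then have "i < i + m" "i + m < j" using lc by auto
    then show "s (c ! m) \<noteq> s (hd c)" using src[of m] first[of "i + m"] hd ret lc m by (simp add: x_def)
  qed (use cne in simp)
qed

lemma NE_cycle_segment_unique_out:
  assumes ne: "condition_NE E1 s r" and ep: "edge_path E1 s r es" and ij: "i < j" "j \<le> length es"
    and ret: "path_vertex s r es i = path_vertex s r es j"
    and first: "\<And>k. i < k \<Longrightarrow> k < j \<Longrightarrow> path_vertex s r es k \<noteq> path_vertex s r es j"
    and k: "i \<le> k" "k < j" and f: "f \<in> E1" "s f = path_vertex s r es k"
  shows "f = es ! k"
proof -
  define c where "c = take (j - i) (drop i es)"
  have "\<not> has_exit E1 s c"
    using ne cycle_segment[OF ep ij ret first] by (simp add: condition_NE_def c_def)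
  moreover have "k - i < length c" "c ! (k - i) = es ! k" using k ij by (auto simp: c_def)
  moreover have "s f = s (es ! k)" using f k ij by (simp add: path_vertex_def)
  ultimately show ?thesis using f(1) unfolding has_exit_def by force
qed

text \<open>\<open>i\<close> is the last index at which the path visits its end vertex; from there on it runs
  around a cycle, which has no exit.\<close>

lemma NE_long_path_tail:
  assumes fg: "finite_graph E0 E1 s r" and ne: "condition_NE E1 s r"
    and ep: "edge_path E1 s r es" and L: "length es > card E0"
  obtains i where "i < length es" "path_vertex s r es i = path_vertex s r es (length es)"
    "\<And>k. i < k \<Longrightarrow> k < length es \<Longrightarrow> path_vertex s r es k \<noteq> path_vertex s r es (length es)"
    "\<And>k f. i \<le> k \<Longrightarrow> k < length es \<Longrightarrow> f \<in> E1 \<Longrightarrow> s f = path_vertex s r es k \<Longrightarrow> f = es ! k"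
proof -
  define n where "n = length es"
  define x where "x = path_vertex s r es"
  have "\<not> inj_on x {..n}"
  proof
    assume "inj_on x {..n}"
    then have "card (x ` {..n}) = Suc n" by (simp add: card_image)
    moreover have "x ` {..n} \<subseteq> E0" using path_vertex_in[OF fg ep] by (auto simp: x_def)
    then have "card (x ` {..n}) \<le> card E0"
      using fg by (intro card_mono) (auto simp: finite_graph_def)
    ultimately show False using L by (simp add: n_def)
  qed
  then obtain a b where ab: "a < b" "b \<le> n" "x a = x b"
    unfolding inj_on_def by (metis atMost_iff linorder_neqE_nat)
  define S where "S = {i. \<exists>j. i < j \<and> j \<le> n \<and> x i = x j}"
  have S: "finite S" "a \<in> S" using ab by (auto simp: S_def intro: finite_subset[of _ "{..n}"])
  define i where "i = Max S"
  obtain j where j: "i < j" "j \<le> n" "x i = x j"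
    using Max_in[OF S(1)] S(2) by (auto simp: i_def S_def)
  have later_distinct: "x k \<noteq> x k'" if "i < k" "k < k'" "k' \<le> n" for k k'
    using Max_ge[OF S(1), of k] that by (auto simp: S_def i_def)
  have first_j: "x k \<noteq> x j" if "i < k" "k < j" for k using later_distinct that j(2) by blast
  have out: "f = es ! k" if "i \<le> k" "k < j" "f \<in> E1" "s f = x k" for k f
    using NE_cycle_segment_unique_out[OF ne ep j(1) j(2)[unfolded n_def]] j(3) first_j that
    unfolding x_def by blast
  have "j = n"
  proof (rule ccontr)
    assume "j \<noteq> n"
    then have jn: "j < n" using j by simp
    have "es ! j \<in> E1" using ep jn by (auto simp: edge_path_def n_def)
    moreover have "s (es ! j) = x i" using j jn by (simp add: x_def path_vertex_def n_def)
    ultimately have "es ! j = es ! i" using out[OF order.refl j(1)] by simp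
    then have "x (Suc i) = x (Suc j)" using path_vertex_Suc[OF ep] j jn by (simp add: x_def n_def)
    then show False using later_distinct[of "Suc i" "Suc j"] j jn by simp
  qed
  then show ?thesis
    using that[of i] j later_distinct[of _ n] out by (auto simp: x_def n_def)
qed

lemma exitless_tail_followed:
  assumes ep1: "edge_path E1 s r es" and ep2: "edge_path E1 s r fs" and len: "length fs = length es"
    and ends: "path_vertex s r es (length es) = path_vertex s r fs (length fs)"
    and i: "i < length es" "path_vertex s r es i = path_vertex s r es (length es)"
      "\<And>k f. i \<le> k \<Longrightarrow> k < length es \<Longrightarrow> f \<in> E1 \<Longrightarrow> s f = path_vertex s r es k \<Longrightarrow> f = es ! k"
    and j: "path_vertex s r fs j = path_vertex s r fs (length fs)" and ji: "j \<le> i"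
    and t: "t < length es - i"
  shows "es ! (i + t) = fs ! (j + t)"
  using t
proof (induction t)
  case 0
  have "s (fs ! j) = path_vertex s r es i"
    using i(1,2) j ends ji by (simp add: len path_vertex_def)
  moreover have "fs ! j \<in> E1" using ep2 len ji i(1) by (auto simp: edge_path_def)
  ultimately show ?case using i(3)[of i "fs ! j"] i(1) by simp
next
  case (Suc t)
  have jt: "j + Suc t < length es" "i + Suc t < length es" using Suc.prems ji by auto
  have "s (fs ! (j + Suc t)) = path_vertex s r fs (Suc (j + t))" using jt by (simp add: path_vertex_def len)
  also have "\<dots> = r (fs ! (j + t))" using path_vertex_Suc[OF ep2, of "j + t"] jt by (simp add: len)
  also have "\<dots> = path_vertex s r es (i + Suc t)" using path_vertex_Suc[OF ep1, of "i + t"] jt Suc by simp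
  finally have "s (fs ! (j + Suc t)) = path_vertex s r es (i + Suc t)" .
  moreover have "fs ! (j + Suc t) \<in> set fs" using jt len by simp
  then have "fs ! (j + Suc t) \<in> E1" using ep2 by (auto simp: edge_path_def)
  ultimately have "fs ! (j + Suc t) = es ! (i + Suc t)"
    using i(3)[of "i + Suc t" "fs ! (j + Suc t)"] jt(2) by simp
  then show ?case by simp
qed

text \<open>Both paths end on the same exitless cycle; the one entering it later has to follow the
  other, so both return to the end vertex after the same number of steps.\<close>

lemma exitless_tails_same_last_edge:
  assumes ep1: "edge_path E1 s r es" and ep2: "edge_path E1 s r fs" and len: "length fs = length es"
    and ends: "path_vertex s r es (length es) = path_vertex s r fs (length fs)"
    and i: "i < length es" "path_vertex s r es i = path_vertex s r es (length es)"
      "\<And>k f. i \<le> k \<Longrightarrow> k < length es \<Longrightarrow> f \<in> E1 \<Longrightarrow> s f = path_vertex s r es k \<Longrightarrow> f = es ! k"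
    and j: "path_vertex s r fs j = path_vertex s r fs (length fs)"
      "\<And>k. j < k \<Longrightarrow> k < length fs \<Longrightarrow> path_vertex s r fs k \<noteq> path_vertex s r fs (length fs)"
    and ji: "j \<le> i"
  shows "last es = last fs"
proof -
  define n where "n = length es"
  have agree: "es ! (i + t) = fs ! (j + t)" if "t < n - i" for t
    using ep1 ep2 len ends i j(1) ji that unfolding n_def by (rule exitless_tail_followed)
  have "i = j"
  proof (rule ccontr)
    assume "i \<noteq> j"
    define t where "t = n - i - 1"
    have t: "t < n - i" "i + t = n - 1" "Suc (j + t) = j + (n - i)" "j + t < n" "0 < n"
      using i(1) ji \<open>i \<noteq> j\<close> by (auto simp: t_def n_def)
    have "path_vertex s r fs (j + (n - i)) = r (fs ! (j + t))"
      using path_vertex_Suc[OF ep2, of "j + t"] t by (simp add: n_def len)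
    also have "\<dots> = path_vertex s r es n"
      using agree[OF t(1)] path_vertex_Suc[OF ep1, of "n - 1"] t(2,5) by (simp add: n_def)
    finally have "path_vertex s r fs (j + (n - i)) = path_vertex s r fs n"
      using ends by (simp add: n_def len)
    moreover have "j < j + (n - i)" "j + (n - i) < n" using i(1) ji \<open>i \<noteq> j\<close> by (auto simp: n_def)
    ultimately show False using j(2)[of "j + (n - i)"] by (simp add: n_def len)
  qed
  then have "es ! (n - 1) = fs ! (n - 1)" using agree[of "n - 1 - i"] i(1) by (simp add: n_def)
  then show ?thesis using ep1 ep2 len by (simp add: last_conv_nth edge_path_def n_def)
qed

lemma NE_long_paths_same_last_edge:
  assumes fg: "finite_graph E0 E1 s r" and ne: "condition_NE E1 s r"
    and ep1: "edge_path E1 s r es" and ep2: "edge_path E1 s r fs"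
    and len: "length fs = length es" and L: "length es > card E0"
    and ends: "r (last es) = r (last fs)"
  shows "last es = last fs" and "\<And>f. f \<in> E1 \<Longrightarrow> s f = s (last es) \<Longrightarrow> f = last es"
proof -
  obtain i where i: "i < length es" "path_vertex s r es i = path_vertex s r es (length es)"
    "\<And>k. i < k \<Longrightarrow> k < length es \<Longrightarrow> path_vertex s r es k \<noteq> path_vertex s r es (length es)"
    "\<And>k f. i \<le> k \<Longrightarrow> k < length es \<Longrightarrow> f \<in> E1 \<Longrightarrow> s f = path_vertex s r es k \<Longrightarrow> f = es ! k"
    using NE_long_path_tail[OF fg ne ep1 L] by blast
  obtain j where j: "j < length fs" "path_vertex s r fs j = path_vertex s r fs (length fs)"
    "\<And>k. j < k \<Longrightarrow> k < length fs \<Longrightarrow> path_vertex s r fs k \<noteq> path_vertex s r fs (length fs)"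
    "\<And>k f. j \<le> k \<Longrightarrow> k < length fs \<Longrightarrow> f \<in> E1 \<Longrightarrow> s f = path_vertex s r fs k \<Longrightarrow> f = fs ! k"
    using NE_long_path_tail[OF fg ne ep2 L[folded len]] by blast
  have ends': "path_vertex s r es (length es) = path_vertex s r fs (length fs)"
    using ends by (simp add: path_vertex_def)
  show "last es = last fs"
  proof (cases "j \<le> i")
    case True
    show ?thesis using exitless_tails_same_last_edge[OF ep1 ep2 len ends' i(1,2,4) j(2,3) True] .
  next
    case False
    then have "i \<le> j" by simp
    show ?thesis
      using exitless_tails_same_last_edge[OF ep2 ep1 len[symmetric] ends'[symmetric] j(1,2,4) i(2,3) \<open>i \<le> j\<close>]
      by (rule sym)
  qed
  fix f assume "f \<in> E1" "s f = s (last es)"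
  moreover have "path_vertex s r es (length es - 1) = s (last es)" "i \<le> length es - 1"
    using ep1 i(1) by (auto simp: path_vertex_def last_conv_nth edge_path_def)
  ultimately show "f = last es"
    using i(4)[of "length es - 1" f] ep1 by (simp add: last_conv_nth edge_path_def)
qed

section \<open>Paths and ghost paths in \<open>L\<^sub>R(E)\<close>\<close>

locale lpa = ring R for R :: "('a, 'm) ring_scheme" (structure) +
  fixes E0 :: "'v set" and E1 :: "'e set" and s r :: "'e \<Rightarrow> 'v"
  assumes finite_graph: "finite_graph E0 E1 s r"
begin

abbreviation "F \<equiv> (free_alg R :: (('v,'e) lgen list \<Rightarrow> 'a) ring)"
abbreviation "I \<equiv> lpa_ideal R E0 E1 s r"
abbreviation "A \<equiv> LPA R E0 E1 s r"
abbreviation "gp \<equiv> gpath E0 E1 s r"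

lemma finite_E0: "finite E0" and finite_E1: "finite E1"
  and source_in_E0: "\<And>e. e \<in> E1 \<Longrightarrow> s e \<in> E0" and range_in_E0: "\<And>e. e \<in> E1 \<Longrightarrow> r e \<in> E0"
  using finite_graph by (auto simp: finite_graph_def)

sublocale F: ring F by (rule free_alg_ring)

lemma lpa_rels_carrier: "lpa_rels R E0 E1 s r \<subseteq> carrier F"
  unfolding lpa_rels_def Let_def
  by (auto simp: mon_carrier intro!: F.minus_closed F.finsum_closed)

sublocale I: ideal I F
  unfolding lpa_ideal_def by (rule F.genideal_ideal[OF lpa_rels_carrier])

sublocale A: ring A
  unfolding LPA_def by (rule I.quotient_is_ring)

definition proj :: "(('v,'e) lgen list \<Rightarrow> 'a) \<Rightarrow> (('v,'e) lgen list \<Rightarrow> 'a) set" where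
  "proj x = I +>\<^bsub>F\<^esub> x"

sublocale P: ring_hom_ring F A proj
  unfolding LPA_def proj_def[abs_def] by (rule I.rcos_ring_hom_ring)

lemma proj_eq_if_rel:
  assumes x: "x \<in> carrier F" and y: "y \<in> carrier F" and xy: "x \<ominus>\<^bsub>F\<^esub> y \<in> lpa_rels R E0 E1 s r"
  shows "proj x = proj y"
proof -
  have "x \<ominus>\<^bsub>F\<^esub> y \<in> I"
    using xy F.genideal_self[OF lpa_rels_carrier] by (auto simp: lpa_ideal_def)
  then have "x \<in> I +>\<^bsub>F\<^esub> y"
    using I.a_rcos_module_minus[OF F.ring_axioms y x] by simp
  then show ?thesis
    unfolding proj_def using I.a_repr_independence'[OF _ y] by simp
qed

definition gen :: "('v,'e) lgen \<Rightarrow> (('v,'e) lgen list \<Rightarrow> 'a) set" where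
  "gen x = proj (mon R [x])"

definition qword :: "('v,'e) lgen list \<Rightarrow> (('v,'e) lgen list \<Rightarrow> 'a) set" where
  "qword w = proj (mon R w)"

abbreviation "vx v \<equiv> gen (Vx v)"
abbreviation "ed e \<equiv> gen (Ed e)"
abbreviation "gh e \<equiv> gen (Gh e)"

lemma gen_carrier [simp]: "gen x \<in> carrier A"
  by (simp add: gen_def mon_carrier)

lemma qword_carrier [simp]: "qword w \<in> carrier A"
  by (simp add: qword_def mon_carrier)

lemma qword_append: "qword (u @ v) = qword u \<otimes>\<^bsub>A\<^esub> qword v"
  by (simp add: qword_def mon_carrier mon_mult[symmetric])

lemma qword_Nil: "qword [] = \<one>\<^bsub>A\<^esub>"
proof -
  have "mon R [] = \<one>\<^bsub>F\<^esub>" by (rule ext) (simp add: mon_def free_alg_one)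
  then show ?thesis by (simp add: qword_def)
qed

lemma qword_single: "qword [x] = gen x"
  by (simp add: gen_def qword_def)

lemma qword_Cons: "qword (x # u) = gen x \<otimes>\<^bsub>A\<^esub> qword u"
  using qword_append[of "[x]" u] by (simp add: qword_single)

lemma lpa_rels_memI:
  shows rels_V: "\<And>u w. u \<in> E0 \<Longrightarrow> w \<in> E0 \<Longrightarrow>
      mon R [Vx u, Vx w] \<ominus>\<^bsub>F\<^esub> (if u = w then mon R [Vx u] else \<zero>\<^bsub>F\<^esub>) \<in> lpa_rels R E0 E1 s r"
    and rels_E1: "\<And>f. f \<in> E1 \<Longrightarrow> mon R [Vx (s f), Ed f] \<ominus>\<^bsub>F\<^esub> mon R [Ed f] \<in> lpa_rels R E0 E1 s r"
    and rels_E2: "\<And>f. f \<in> E1 \<Longrightarrow> mon R [Ed f, Vx (r f)] \<ominus>\<^bsub>F\<^esub> mon R [Ed f] \<in> lpa_rels R E0 E1 s r"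
    and rels_G1: "\<And>f. f \<in> E1 \<Longrightarrow> mon R [Vx (r f), Gh f] \<ominus>\<^bsub>F\<^esub> mon R [Gh f] \<in> lpa_rels R E0 E1 s r"
    and rels_G2: "\<And>f. f \<in> E1 \<Longrightarrow> mon R [Gh f, Vx (s f)] \<ominus>\<^bsub>F\<^esub> mon R [Gh f] \<in> lpa_rels R E0 E1 s r"
    and rels_CK1: "\<And>f g. f \<in> E1 \<Longrightarrow> g \<in> E1 \<Longrightarrow>
      mon R [Gh f, Ed g] \<ominus>\<^bsub>F\<^esub> (if f = g then mon R [Vx (r f)] else \<zero>\<^bsub>F\<^esub>) \<in> lpa_rels R E0 E1 s r"
    and rels_CK2: "\<And>v. v \<in> E0 \<Longrightarrow> {f \<in> E1. s f = v} \<noteq> {} \<Longrightarrow> finite {f \<in> E1. s f = v} \<Longrightarrow>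
      (finsum F (\<lambda>f. mon R [Ed f, Gh f]) {f \<in> E1. s f = v}) \<ominus>\<^bsub>F\<^esub> mon R [Vx v] \<in> lpa_rels R E0 E1 s r"
    and rels_unit: "\<one>\<^bsub>F\<^esub> \<ominus>\<^bsub>F\<^esub> (finsum F (\<lambda>v. mon R [Vx v]) E0) \<in> lpa_rels R E0 E1 s r"
  unfolding lpa_rels_def Let_def
  subgoal by (rule UnI1, rule UnI1, rule UnI1, rule UnI1, rule UnI1, rule UnI1, rule UnI1) blast
  subgoal by (rule UnI1, rule UnI1, rule UnI1, rule UnI1, rule UnI1, rule UnI1, rule UnI2) blast
  subgoal by (rule UnI1, rule UnI1, rule UnI1, rule UnI1, rule UnI1, rule UnI2) blast
  subgoal by (rule UnI1, rule UnI1, rule UnI1, rule UnI1, rule UnI2) blast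
  subgoal by (rule UnI1, rule UnI1, rule UnI1, rule UnI2) blast
  subgoal by (rule UnI1, rule UnI1, rule UnI2) blast
  subgoal by (rule UnI1, rule UnI2) blast
  subgoal by (rule UnI2) blast
  done

lemma gen_mult_if_rel:
  assumes "mon R [x, y] \<ominus>\<^bsub>F\<^esub> z \<in> lpa_rels R E0 E1 s r" "z \<in> carrier F"
  shows "gen x \<otimes>\<^bsub>A\<^esub> gen y = proj z"
  using qword_Cons[of x "[y]"] proj_eq_if_rel[OF mon_carrier assms(2,1)]
  by (simp add: qword_def gen_def)

lemma rel_V: "u \<in> E0 \<Longrightarrow> w \<in> E0 \<Longrightarrow> vx u \<otimes>\<^bsub>A\<^esub> vx w = (if u = w then vx u else \<zero>\<^bsub>A\<^esub>)"
  using gen_mult_if_rel[OF rels_V] by (auto simp: gen_def mon_carrier)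

lemma rel_E1: "f \<in> E1 \<Longrightarrow> vx (s f) \<otimes>\<^bsub>A\<^esub> ed f = ed f"
  and rel_E2: "f \<in> E1 \<Longrightarrow> ed f \<otimes>\<^bsub>A\<^esub> vx (r f) = ed f"
  and rel_G1: "f \<in> E1 \<Longrightarrow> vx (r f) \<otimes>\<^bsub>A\<^esub> gh f = gh f"
  and rel_G2: "f \<in> E1 \<Longrightarrow> gh f \<otimes>\<^bsub>A\<^esub> vx (s f) = gh f"
  by (auto simp: gen_def mon_carrier intro!: gen_mult_if_rel[simplified gen_def] lpa_rels_memI)

lemma rel_CK1: "f \<in> E1 \<Longrightarrow> g \<in> E1 \<Longrightarrow> gh f \<otimes>\<^bsub>A\<^esub> ed g = (if f = g then vx (r f) else \<zero>\<^bsub>A\<^esub>)"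
  using gen_mult_if_rel[OF rels_CK1] by (auto simp: gen_def mon_carrier)

lemma rel_CK2:
  assumes "v \<in> E0" "{f \<in> E1. s f = v} \<noteq> {}"
  shows "(\<Oplus>\<^bsub>A\<^esub>f\<in>{f \<in> E1. s f = v}. ed f \<otimes>\<^bsub>A\<^esub> gh f) = vx v"
proof -
  have "proj (finsum F (\<lambda>f. mon R [Ed f, Gh f]) {f \<in> E1. s f = v}) = vx v"
    unfolding gen_def
    by (rule proj_eq_if_rel) (use assms finite_E1 in \<open>auto simp: mon_carrier intro!: rels_CK2\<close>)
  moreover have "proj (mon R [Ed f, Gh f]) = ed f \<otimes>\<^bsub>A\<^esub> gh f" for f
    using qword_Cons[of "Ed f" "[Gh f]"] by (simp add: qword_def gen_def)
  ultimately show ?thesis by (simp add: mon_carrier o_def)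
qed

lemma rel_unit: "\<one>\<^bsub>A\<^esub> = (\<Oplus>\<^bsub>A\<^esub>v\<in>E0. vx v)"
proof -
  have "proj \<one>\<^bsub>F\<^esub> = proj (finsum F (\<lambda>v. mon R [Vx v]) E0)"
    by (rule proj_eq_if_rel) (auto simp: mon_carrier intro!: rels_unit)
  then show ?thesis by (simp add: mon_carrier o_def gen_def)
qed

lemma ed_vx: "e \<in> E1 \<Longrightarrow> w \<in> E0 \<Longrightarrow> ed e \<otimes>\<^bsub>A\<^esub> vx w = (if w = r e then ed e else \<zero>\<^bsub>A\<^esub>)"
  using rel_V[OF range_in_E0, of e w] rel_E2[of e]
  by (metis A.m_assoc A.r_null gen_carrier)

lemma vx_ed: "e \<in> E1 \<Longrightarrow> w \<in> E0 \<Longrightarrow> vx w \<otimes>\<^bsub>A\<^esub> ed e = (if w = s e then ed e else \<zero>\<^bsub>A\<^esub>)"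
  using rel_V[OF _ source_in_E0, of w e] rel_E1[of e]
  by (metis A.m_assoc A.l_null gen_carrier)

lemma gh_vx: "e \<in> E1 \<Longrightarrow> w \<in> E0 \<Longrightarrow> gh e \<otimes>\<^bsub>A\<^esub> vx w = (if w = s e then gh e else \<zero>\<^bsub>A\<^esub>)"
  using rel_V[OF source_in_E0, of e w] rel_G2[of e]
  by (metis A.m_assoc A.r_null gen_carrier)

lemma vx_gh: "e \<in> E1 \<Longrightarrow> w \<in> E0 \<Longrightarrow> vx w \<otimes>\<^bsub>A\<^esub> gh e = (if w = r e then gh e else \<zero>\<^bsub>A\<^esub>)"
  using rel_V[OF _ range_in_E0, of w e] rel_G1[of e]
  by (metis A.m_assoc A.l_null gen_carrier)

lemma gpath_fst_in: "gp p \<Longrightarrow> fst p \<in> E0"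
  by (cases p) (simp add: gpath_simp)

lemma gpath_edges_in: "gp p \<Longrightarrow> set (snd p) \<subseteq> E1"
  by (cases p) (auto simp: gpath_simp edge_path_def)

lemma gpath_range_in: "gp p \<Longrightarrow> path_range r p \<in> E0"
  by (cases p) (auto simp: gpath_simp path_range_def edge_path_def intro!: range_in_E0)

lemma gpath_vertex: "v \<in> E0 \<Longrightarrow> gp (v, [])"
  by (simp add: gpath_simp)

definition edge_prod :: "'e list \<Rightarrow> (('v,'e) lgen list \<Rightarrow> 'a) set" where
  "edge_prod es = qword (map Ed es)"

definition ghost_prod :: "'e list \<Rightarrow> (('v,'e) lgen list \<Rightarrow> 'a) set" where
  "ghost_prod es = qword (map Gh (rev es))"

text \<open>A path \<open>p = (v, es)\<close> denotes \<open>v e\<^sub>1 \<cdots> e\<^sub>n\<close> and its ghost \<open>e\<^sub>n\<^sup>* \<cdots> e\<^sub>1\<^sup>* v\<close>;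
  the redundant vertex factor makes the length-0 case uniform.\<close>

definition path_elt :: "'v \<times> 'e list \<Rightarrow> (('v,'e) lgen list \<Rightarrow> 'a) set" where
  "path_elt p = vx (fst p) \<otimes>\<^bsub>A\<^esub> edge_prod (snd p)"

definition ghost_elt :: "'v \<times> 'e list \<Rightarrow> (('v,'e) lgen list \<Rightarrow> 'a) set" where
  "ghost_elt p = ghost_prod (snd p) \<otimes>\<^bsub>A\<^esub> vx (fst p)"

definition path_ghost :: "'v \<times> 'e list \<Rightarrow> 'v \<times> 'e list \<Rightarrow> (('v,'e) lgen list \<Rightarrow> 'a) set" where
  "path_ghost p q = path_elt p \<otimes>\<^bsub>A\<^esub> ghost_elt q"

lemma edge_prod_carrier [simp]: "edge_prod es \<in> carrier A"
  and ghost_prod_carrier [simp]: "ghost_prod es \<in> carrier A"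
  and path_elt_carrier [simp]: "path_elt p \<in> carrier A"
  and ghost_elt_carrier [simp]: "ghost_elt p \<in> carrier A"
  and path_ghost_carrier [simp]: "path_ghost p q \<in> carrier A"
  by (simp_all add: edge_prod_def ghost_prod_def path_elt_def ghost_elt_def path_ghost_def)

lemma edge_prod_Nil: "edge_prod [] = \<one>\<^bsub>A\<^esub>"
  and ghost_prod_Nil: "ghost_prod [] = \<one>\<^bsub>A\<^esub>"
  and edge_prod_append: "edge_prod (xs @ ys) = edge_prod xs \<otimes>\<^bsub>A\<^esub> edge_prod ys"
  and ghost_prod_append: "ghost_prod (xs @ ys) = ghost_prod ys \<otimes>\<^bsub>A\<^esub> ghost_prod xs"
  by (simp_all add: edge_prod_def ghost_prod_def qword_Nil qword_append)

lemma edge_prod_Cons: "edge_prod (e # es) = ed e \<otimes>\<^bsub>A\<^esub> edge_prod es"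
  and edge_prod_snoc: "edge_prod (es @ [e]) = edge_prod es \<otimes>\<^bsub>A\<^esub> ed e"
  and ghost_prod_Cons: "ghost_prod (e # es) = ghost_prod es \<otimes>\<^bsub>A\<^esub> gh e"
  and ghost_prod_snoc: "ghost_prod (es @ [e]) = gh e \<otimes>\<^bsub>A\<^esub> ghost_prod es"
  using edge_prod_append[of "[e]" es] edge_prod_append[of es "[e]"]
    ghost_prod_append[of "[e]" es] ghost_prod_append[of es "[e]"]
  by (simp_all add: edge_prod_def ghost_prod_def qword_single)

lemma edge_prod_vx:
  assumes "set es \<subseteq> E1" "es \<noteq> []" "w \<in> E0"
  shows "edge_prod es \<otimes>\<^bsub>A\<^esub> vx w = (if w = r (last es) then edge_prod es else \<zero>\<^bsub>A\<^esub>)"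
proof -
  obtain xs l where es: "es = xs @ [l]" using assms(2) by (metis append_butlast_last_id)
  have "edge_prod es \<otimes>\<^bsub>A\<^esub> vx w = edge_prod xs \<otimes>\<^bsub>A\<^esub> (ed l \<otimes>\<^bsub>A\<^esub> vx w)"
    by (simp add: es edge_prod_snoc A.m_assoc)
  then show ?thesis using ed_vx[of l w] assms by (simp add: es edge_prod_snoc)
qed

lemma vx_edge_prod:
  assumes "set es \<subseteq> E1" "es \<noteq> []" "w \<in> E0"
  shows "vx w \<otimes>\<^bsub>A\<^esub> edge_prod es = (if w = s (hd es) then edge_prod es else \<zero>\<^bsub>A\<^esub>)"
proof -
  obtain e xs where es: "es = e # xs" using assms(2) by (cases es) auto
  have "vx w \<otimes>\<^bsub>A\<^esub> edge_prod es = (vx w \<otimes>\<^bsub>A\<^esub> ed e) \<otimes>\<^bsub>A\<^esub> edge_prod xs"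
    by (simp add: es edge_prod_Cons A.m_assoc)
  then show ?thesis using vx_ed[of e w] assms by (simp add: es edge_prod_Cons)
qed

lemma ghost_prod_vx:
  assumes "set es \<subseteq> E1" "es \<noteq> []" "w \<in> E0"
  shows "ghost_prod es \<otimes>\<^bsub>A\<^esub> vx w = (if w = s (hd es) then ghost_prod es else \<zero>\<^bsub>A\<^esub>)"
proof -
  obtain e xs where es: "es = e # xs" using assms(2) by (cases es) auto
  have "ghost_prod es \<otimes>\<^bsub>A\<^esub> vx w = ghost_prod xs \<otimes>\<^bsub>A\<^esub> (gh e \<otimes>\<^bsub>A\<^esub> vx w)"
    by (simp add: es ghost_prod_Cons A.m_assoc)
  then show ?thesis using gh_vx[of e w] assms by (simp add: es ghost_prod_Cons)
qed

lemma vx_ghost_prod: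
  assumes "set es \<subseteq> E1" "es \<noteq> []" "w \<in> E0"
  shows "vx w \<otimes>\<^bsub>A\<^esub> ghost_prod es = (if w = r (last es) then ghost_prod es else \<zero>\<^bsub>A\<^esub>)"
proof -
  obtain xs l where es: "es = xs @ [l]" using assms(2) by (metis append_butlast_last_id)
  have "vx w \<otimes>\<^bsub>A\<^esub> ghost_prod es = (vx w \<otimes>\<^bsub>A\<^esub> gh l) \<otimes>\<^bsub>A\<^esub> ghost_prod xs"
    by (simp add: es ghost_prod_snoc A.m_assoc)
  then show ?thesis using vx_gh[of l w] assms by (simp add: es ghost_prod_snoc)
qed

lemma path_elt_vx:
  assumes "gp p" "w \<in> E0"
  shows "path_elt p \<otimes>\<^bsub>A\<^esub> vx w = (if w = path_range r p then path_elt p else \<zero>\<^bsub>A\<^esub>)"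
proof (cases "snd p = []")
  case True
  then show ?thesis using rel_V[OF gpath_fst_in[OF assms(1)] assms(2)]
    by (auto simp: path_elt_def edge_prod_Nil path_range_def)
next
  case False
  have "path_elt p \<otimes>\<^bsub>A\<^esub> vx w = vx (fst p) \<otimes>\<^bsub>A\<^esub> (edge_prod (snd p) \<otimes>\<^bsub>A\<^esub> vx w)"
    by (simp add: path_elt_def A.m_assoc)
  then show ?thesis
    using edge_prod_vx[OF gpath_edges_in[OF assms(1)] False assms(2)] False
    by (simp add: path_range_def path_elt_def)
qed

lemma vx_path_elt:
  assumes "gp p" "w \<in> E0"
  shows "vx w \<otimes>\<^bsub>A\<^esub> path_elt p = (if w = fst p then path_elt p else \<zero>\<^bsub>A\<^esub>)"
proof -
  have "vx w \<otimes>\<^bsub>A\<^esub> path_elt p = (vx w \<otimes>\<^bsub>A\<^esub> vx (fst p)) \<otimes>\<^bsub>A\<^esub> edge_prod (snd p)"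
    by (simp add: path_elt_def A.m_assoc)
  then show ?thesis using rel_V[OF assms(2) gpath_fst_in[OF assms(1)]] by (simp add: path_elt_def)
qed

lemma ghost_elt_vx:
  assumes "gp p" "w \<in> E0"
  shows "ghost_elt p \<otimes>\<^bsub>A\<^esub> vx w = (if w = fst p then ghost_elt p else \<zero>\<^bsub>A\<^esub>)"
proof -
  have "ghost_elt p \<otimes>\<^bsub>A\<^esub> vx w = ghost_prod (snd p) \<otimes>\<^bsub>A\<^esub> (vx (fst p) \<otimes>\<^bsub>A\<^esub> vx w)"
    by (simp add: ghost_elt_def A.m_assoc)
  then show ?thesis using rel_V[OF gpath_fst_in[OF assms(1)] assms(2)] by (auto simp: ghost_elt_def)
qed

lemma vx_ghost_elt:
  assumes "gp p" "w \<in> E0"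
  shows "vx w \<otimes>\<^bsub>A\<^esub> ghost_elt p = (if w = path_range r p then ghost_elt p else \<zero>\<^bsub>A\<^esub>)"
proof (cases "snd p = []")
  case True
  then show ?thesis using rel_V[OF assms(2) gpath_fst_in[OF assms(1)]]
    by (auto simp: ghost_elt_def ghost_prod_Nil path_range_def)
next
  case False
  have "vx w \<otimes>\<^bsub>A\<^esub> ghost_elt p = (vx w \<otimes>\<^bsub>A\<^esub> ghost_prod (snd p)) \<otimes>\<^bsub>A\<^esub> vx (fst p)"
    by (simp add: ghost_elt_def A.m_assoc)
  then show ?thesis
    using vx_ghost_prod[OF gpath_edges_in[OF assms(1)] False assms(2)] False
    by (simp add: path_range_def ghost_elt_def)
qed

lemma path_elt_mult:
  assumes "gp p" "gp q"
  shows "path_elt p \<otimes>\<^bsub>A\<^esub> path_elt q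
    = (if path_range r p = fst q then path_elt (fst p, snd p @ snd q) else \<zero>\<^bsub>A\<^esub>)"
proof -
  have "path_elt p \<otimes>\<^bsub>A\<^esub> path_elt q = (path_elt p \<otimes>\<^bsub>A\<^esub> vx (fst q)) \<otimes>\<^bsub>A\<^esub> edge_prod (snd q)"
    by (simp add: path_elt_def[of q] A.m_assoc)
  also have "\<dots> = (if path_range r p = fst q then path_elt (fst p, snd p @ snd q) else \<zero>\<^bsub>A\<^esub>)"
    using path_elt_vx[OF assms(1) gpath_fst_in[OF assms(2)]]
    by (auto simp: path_elt_def edge_prod_append A.m_assoc)
  finally show ?thesis .
qed

lemma ghost_elt_mult:
  assumes "gp p" "gp q"
  shows "ghost_elt p \<otimes>\<^bsub>A\<^esub> ghost_elt q
    = (if path_range r q = fst p then ghost_elt (fst q, snd q @ snd p) else \<zero>\<^bsub>A\<^esub>)"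
proof -
  have "ghost_elt p \<otimes>\<^bsub>A\<^esub> ghost_elt q = ghost_prod (snd p) \<otimes>\<^bsub>A\<^esub> (vx (fst p) \<otimes>\<^bsub>A\<^esub> ghost_elt q)"
    by (simp add: ghost_elt_def[of p] A.m_assoc)
  also have "\<dots> = (if path_range r q = fst p then ghost_elt (fst q, snd q @ snd p) else \<zero>\<^bsub>A\<^esub>)"
    using vx_ghost_elt[OF assms(2) gpath_fst_in[OF assms(1)]]
    by (auto simp: ghost_elt_def ghost_prod_append A.m_assoc)
  finally show ?thesis .
qed

lemma ghost_path_mult_Cons:
  assumes b: "b \<in> E1" and c: "c \<in> E1"
  shows "ghost_elt (s b, b # bs) \<otimes>\<^bsub>A\<^esub> path_elt (s c, c # cs)
    = (if b = c then ghost_elt (r b, bs) \<otimes>\<^bsub>A\<^esub> path_elt (r b, cs) else \<zero>\<^bsub>A\<^esub>)"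
proof -
  have "ghost_elt (s b, b # bs) = ghost_prod bs \<otimes>\<^bsub>A\<^esub> gh b"
    using rel_G2[OF b] by (simp add: ghost_elt_def ghost_prod_Cons A.m_assoc)
  moreover have "path_elt (s c, c # cs) = ed c \<otimes>\<^bsub>A\<^esub> edge_prod cs"
    using rel_E1[OF c] by (simp add: path_elt_def edge_prod_Cons A.m_assoc[symmetric])
  ultimately have "ghost_elt (s b, b # bs) \<otimes>\<^bsub>A\<^esub> path_elt (s c, c # cs)
      = ghost_prod bs \<otimes>\<^bsub>A\<^esub> (gh b \<otimes>\<^bsub>A\<^esub> ed c) \<otimes>\<^bsub>A\<^esub> edge_prod cs"
    by (simp add: A.m_assoc)
  also have "\<dots> = (if b = c then ghost_elt (r b, bs) \<otimes>\<^bsub>A\<^esub> path_elt (r b, cs) else \<zero>\<^bsub>A\<^esub>)"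
  proof (cases "b = c")
    case True
    have "ghost_elt (r b, bs) \<otimes>\<^bsub>A\<^esub> path_elt (r b, cs)
        = ghost_prod bs \<otimes>\<^bsub>A\<^esub> (vx (r b) \<otimes>\<^bsub>A\<^esub> vx (r b)) \<otimes>\<^bsub>A\<^esub> edge_prod cs"
      by (simp add: ghost_elt_def path_elt_def A.m_assoc)
    then show ?thesis
      using True rel_CK1[OF b c] rel_V[OF range_in_E0[OF b] range_in_E0[OF b]] by simp
  qed (simp add: rel_CK1[OF b c])
  finally show ?thesis .
qed

text \<open>The Cuntz--Krieger relation \<open>e\<^sup>* f = \<delta>\<^sub>e\<^sub>f r(e)\<close> cancels the common prefix of two
  paths; what survives is zero, a path, or a ghost path.\<close>

lemma ghost_path_mult_cases:
  assumes "gp (v, bs)" "gp (u, cs)"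
  shows "ghost_elt (v, bs) \<otimes>\<^bsub>A\<^esub> path_elt (u, cs) = \<zero>\<^bsub>A\<^esub>
    \<or> (\<exists>q. gp q \<and> length bs + length (snd q) = length cs
           \<and> ghost_elt (v, bs) \<otimes>\<^bsub>A\<^esub> path_elt (u, cs) = path_elt q)
    \<or> (\<exists>q. gp q \<and> length cs + length (snd q) = length bs
           \<and> ghost_elt (v, bs) \<otimes>\<^bsub>A\<^esub> path_elt (u, cs) = ghost_elt q)"
  using assms
proof (induction bs arbitrary: v u cs)
  case Nil
  have "ghost_elt (v, []) \<otimes>\<^bsub>A\<^esub> path_elt (u, cs) = (if v = u then path_elt (u, cs) else \<zero>\<^bsub>A\<^esub>)"
    using vx_path_elt[OF Nil(2) gpath_fst_in[OF Nil(1)]] by (simp add: ghost_elt_def ghost_prod_Nil)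
  then show ?case using Nil by auto
next
  case (Cons b bs)
  have b: "b \<in> E1" and vb: "v = s b" and bs: "gp (r b, bs)"
    using Cons.prems(1) range_in_E0 by (auto simp: gpath_simp edge_path_Cons)
  show ?case
  proof (cases cs)
    case Nil
    have "ghost_elt (v, b # bs) \<otimes>\<^bsub>A\<^esub> path_elt (u, cs) = (if u = v then ghost_elt (v, b # bs) else \<zero>\<^bsub>A\<^esub>)"
      using ghost_elt_vx[OF Cons.prems(1) gpath_fst_in[OF Cons.prems(2)]]
      by (simp add: Nil path_elt_def edge_prod_Nil)
    then show ?thesis
    proof (cases "u = v")
      case True
      then show ?thesis using \<open>_ = (if u = v then _ else _)\<close> Cons.prems(1) Nil
        by (intro disjI2 exI[of _ "(v, b # bs)"]) simp
    qed simp
  next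
    case (Cons c cs')
    have c: "c \<in> E1" and uc: "u = s c" and cs': "gp (r c, cs')"
      using Cons.prems(2) range_in_E0 by (auto simp: Cons gpath_simp edge_path_Cons)
    show ?thesis
      using ghost_path_mult_Cons[OF b c, of bs cs'] Cons.IH[OF bs, of "r b" cs'] cs'
      by (auto simp: Cons vb uc)
  qed
qed

lemma path_ghost_mult_cases:
  assumes "gp a" "gp b" "gp c" "gp d" "length (snd a) = length (snd b)" "length (snd c) = length (snd d)"
  shows "path_ghost a b \<otimes>\<^bsub>A\<^esub> path_ghost c d = \<zero>\<^bsub>A\<^esub> \<or>
    (\<exists>a' d'. gp a' \<and> gp d' \<and> length (snd a') = length (snd d')
       \<and> path_ghost a b \<otimes>\<^bsub>A\<^esub> path_ghost c d = path_ghost a' d')"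
proof -
  have eq: "path_ghost a b \<otimes>\<^bsub>A\<^esub> path_ghost c d
      = path_elt a \<otimes>\<^bsub>A\<^esub> (ghost_elt b \<otimes>\<^bsub>A\<^esub> path_elt c) \<otimes>\<^bsub>A\<^esub> ghost_elt d"
    by (simp add: path_ghost_def A.m_assoc)
  from ghost_path_mult_cases[of "fst b" "snd b" "fst c" "snd c"] assms
  consider (zero) "ghost_elt b \<otimes>\<^bsub>A\<^esub> path_elt c = \<zero>\<^bsub>A\<^esub>"
    | (path) q where "gp q" "length (snd b) + length (snd q) = length (snd c)"
        "ghost_elt b \<otimes>\<^bsub>A\<^esub> path_elt c = path_elt q"
    | (ghost) q where "gp q" "length (snd c) + length (snd q) = length (snd b)"
        "ghost_elt b \<otimes>\<^bsub>A\<^esub> path_elt c = ghost_elt q"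
    by auto
  then show ?thesis
  proof cases
    case zero
    then show ?thesis using eq by simp
  next
    case path
    have prod: "path_ghost a b \<otimes>\<^bsub>A\<^esub> path_ghost c d
        = (if path_range r a = fst q then path_ghost (fst a, snd a @ snd q) d else \<zero>\<^bsub>A\<^esub>)"
      using eq path path_elt_mult[OF assms(1) path(1)] by (simp add: path_ghost_def)
    show ?thesis
    proof (cases "path_range r a = fst q")
      case True
      then show ?thesis using prod gpath_concat[OF assms(1) path(1)] assms(4-6) path(2)
        by (intro disjI2 exI[of _ "(fst a, snd a @ snd q)"] exI[of _ d]) simp
    qed (use prod in simp)
  next
    case ghost
    have prod: "path_ghost a b \<otimes>\<^bsub>A\<^esub> path_ghost c d
        = (if path_range r d = fst q then path_ghost a (fst d, snd d @ snd q) else \<zero>\<^bsub>A\<^esub>)"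
      using eq ghost ghost_elt_mult[OF ghost(1) assms(4)] by (simp add: path_ghost_def A.m_assoc)
    show ?thesis
    proof (cases "path_range r d = fst q")
      case True
      then show ?thesis using prod gpath_concat[OF assms(4) ghost(1)] assms(1,5,6) ghost(2)
        by (intro disjI2 exI[of _ a] exI[of _ "(fst d, snd d @ snd q)"]) simp
    qed (use prod in simp)
  qed
qed

lemma path_elt_eq_qword: "gp p \<Longrightarrow> path_elt p = qword (path_word p)"
  and ghost_elt_eq_qword: "gp p \<Longrightarrow> ghost_elt p = qword (ghost_word p)"
proof -
  assume p: "gp p"
  show "path_elt p = qword (path_word p)"
  proof (cases "snd p = []")
    case False
    then show ?thesis
      using p vx_edge_prod[of "snd p" "fst p"] gpath_edges_in[OF p] gpath_fst_in[OF p]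
      by (cases p) (auto simp: path_word_def path_elt_def edge_prod_def gpath_simp)
  qed (cases p, simp add: path_word_def path_elt_def edge_prod_Nil qword_single)
  show "ghost_elt p = qword (ghost_word p)"
  proof (cases "snd p = []")
    case False
    then show ?thesis
      using p ghost_prod_vx[of "snd p" "fst p"] gpath_edges_in[OF p] gpath_fst_in[OF p]
      by (cases p) (auto simp: ghost_word_def ghost_elt_def ghost_prod_def gpath_simp)
  qed (cases p, simp add: ghost_word_def ghost_elt_def ghost_prod_Nil qword_single)
qed

lemma path_ghost_eq_qword:
  "path_ghost p q = qword ([Vx (fst p)] @ map Ed (snd p) @ map Gh (rev (snd q)) @ [Vx (fst q)])"
  by (simp add: path_ghost_def path_elt_def ghost_elt_def edge_prod_def ghost_prod_def
      qword_append qword_Cons qword_Nil A.m_assoc)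

lemma path_ghost_eq_zero:
  assumes "gp a" "gp b" "path_range r a \<noteq> path_range r b"
  shows "path_ghost a b = \<zero>\<^bsub>A\<^esub>"
proof -
  have "path_ghost a b = (path_elt a \<otimes>\<^bsub>A\<^esub> vx (path_range r a)) \<otimes>\<^bsub>A\<^esub> ghost_elt b"
    using path_elt_vx[OF assms(1) gpath_range_in[OF assms(1)]] by (simp add: path_ghost_def)
  also have "\<dots> = path_elt a \<otimes>\<^bsub>A\<^esub> (vx (path_range r a) \<otimes>\<^bsub>A\<^esub> ghost_elt b)"
    by (simp add: A.m_assoc)
  also have "\<dots> = \<zero>\<^bsub>A\<^esub>" using vx_ghost_elt[OF assms(2) gpath_range_in[OF assms(1)]] assms(3) by simp
  finally show ?thesis .
qed

text \<open>If \<open>l\<close> is the only edge leaving \<open>s(l)\<close>, then (CK2) reads \<open>l l\<^sup>* = s(l)\<close>.\<close>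

lemma path_ghost_snoc_cancel:
  assumes a: "gp (v, as @ [l])" and b: "gp (w, bs @ [l])" and out: "{f \<in> E1. s f = s l} = {l}"
  shows "path_ghost (v, as @ [l]) (w, bs @ [l]) = path_ghost (v, as) (w, bs)"
proof -
  have "path_ghost (v, as @ [l]) (w, bs @ [l])
      = path_elt (v, as) \<otimes>\<^bsub>A\<^esub> (ed l \<otimes>\<^bsub>A\<^esub> gh l) \<otimes>\<^bsub>A\<^esub> ghost_elt (w, bs)"
    by (simp add: path_ghost_def path_elt_def ghost_elt_def edge_prod_snoc ghost_prod_snoc A.m_assoc)
  also have "ed l \<otimes>\<^bsub>A\<^esub> gh l = vx (s l)"
    using rel_CK2[OF source_in_E0[OF gpath_snocD(2)[OF a]]] out by (simp add: A.finsum_insert)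
  finally show ?thesis
    using path_elt_vx[OF gpath_snocD(1)[OF a] source_in_E0[OF gpath_snocD(2)[OF a]]] gpath_snocD(3)[OF a]
    by (simp add: path_ghost_def)
qed

lemma path_ghost_shorten:
  assumes ne: "condition_NE E1 s r" and a: "gp (v, as)" and b: "gp (w, bs)"
    and len: "length as = length bs" and long: "length as > card E0"
  shows "path_ghost (v, as) (w, bs) = \<zero>\<^bsub>A\<^esub> \<or> (\<exists>a' b'. gp a' \<and> gp b'
     \<and> length (snd a') = length (snd b') \<and> length (snd a') < length as
     \<and> path_ghost (v, as) (w, bs) = path_ghost a' b')"
proof (cases "r (last as) = r (last bs)")
  case False
  have "as \<noteq> []" "bs \<noteq> []" using len long by auto
  then have "path_ghost (v, as) (w, bs) = \<zero>\<^bsub>A\<^esub>"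
    using path_ghost_eq_zero[OF a b] False by (simp add: path_range_def)
  then show ?thesis by simp
next
  case True
  have asne: "as \<noteq> []" and bsne: "bs \<noteq> []" using len long by auto
  have ep: "edge_path E1 s r as" "edge_path E1 s r bs" using a b asne bsne by (auto simp: gpath_simp)
  note last = NE_long_paths_same_last_edge[OF finite_graph ne ep(1,2) len[symmetric] long True]
  obtain as' l where as: "as = as' @ [l]" using asne by (metis append_butlast_last_id)
  obtain bs' where bs: "bs = bs' @ [l]" using bsne last(1) as by (metis append_butlast_last_id last_snoc)
  have "{f \<in> E1. s f = s l} = {l}"
    using last(2) gpath_snocD(2)[of E0 E1 s r v as' l] a by (auto simp: as)
  then have "path_ghost (v, as) (w, bs) = path_ghost (v, as') (w, bs')"
    using path_ghost_snoc_cancel a b by (simp add: as bs)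
  moreover have "gp (v, as')" "gp (w, bs')" using gpath_snocD(1) a b by (auto simp: as bs)
  moreover have "length (snd (v, as')) = length (snd (w, bs'))" "length (snd (v, as')) < length as"
    using len by (auto simp: as bs)
  ultimately show ?thesis by blast
qed

lemma path_ghost_bounded:
  assumes ne: "condition_NE E1 s r"
  shows "gp a \<Longrightarrow> gp b \<Longrightarrow> length (snd a) = length (snd b) \<Longrightarrow>
    path_ghost a b = \<zero>\<^bsub>A\<^esub> \<or> (\<exists>a' b'. gp a' \<and> gp b' \<and> length (snd a') = length (snd b')
           \<and> length (snd a') \<le> card E0 \<and> path_ghost a b = path_ghost a' b')"
proof (induction "length (snd a)" arbitrary: a b rule: less_induct)
  case less
  show ?case
  proof (cases "length (snd a) \<le> card E0")
    case True
    then show ?thesis using less.prems by blast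
  next
    case False
    then consider "path_ghost a b = \<zero>\<^bsub>A\<^esub>"
      | a' b' where "gp a'" "gp b'" "length (snd a') = length (snd b')"
        "length (snd a') < length (snd a)" "path_ghost a b = path_ghost a' b'"
      using path_ghost_shorten[OF ne, of "fst a" "snd a" "fst b" "snd b"] less.prems by auto
    then show ?thesis
    proof cases
      case 2
      then show ?thesis using less.hyps[of a' b'] by auto
    qed simp
  qed
qed

definition scal :: "'a \<Rightarrow> (('v,'e) lgen list \<Rightarrow> 'a) set" where
  "scal c = proj (smon R c [])"

lemma scal_carrier [simp]: "c \<in> carrier R \<Longrightarrow> scal c \<in> carrier A"
  by (simp add: scal_def smon_carrier)

lemma proj_smon:
  assumes "c \<in> carrier R"
  shows "proj (smon R c u) = scal c \<otimes>\<^bsub>A\<^esub> qword u" and "proj (smon R c u) = qword u \<otimes>\<^bsub>A\<^esub> scal c"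
  using P.hom_mult[OF smon_carrier[OF assms] mon_carrier, of "[]" u]
    P.hom_mult[OF mon_carrier smon_carrier[OF assms], of u "[]"]
    smon_eq_scalar_mult[OF assms, of u, symmetric]
  by (simp_all add: scal_def qword_def)

lemma scal_path_ghost_comm: "c \<in> carrier R \<Longrightarrow> scal c \<otimes>\<^bsub>A\<^esub> path_ghost p q = path_ghost p q \<otimes>\<^bsub>A\<^esub> scal c"
  using proj_smon by (metis path_ghost_eq_qword)

lemma scal_add: "c \<in> carrier R \<Longrightarrow> d \<in> carrier R \<Longrightarrow> scal (c \<oplus> d) = scal c \<oplus>\<^bsub>A\<^esub> scal d"
  by (simp add: scal_def smon_add[symmetric] smon_carrier)

lemma scal_mult: "c \<in> carrier R \<Longrightarrow> d \<in> carrier R \<Longrightarrow> scal (c \<otimes> d) = scal c \<otimes>\<^bsub>A\<^esub> scal d"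
  using P.hom_mult[of "smon R c []" "smon R d []"] smon_mult[of c d "[] :: ('v,'e) lgen list" "[]"]
  by (simp add: scal_def smon_carrier)

lemma scal_zero: "scal \<zero> = \<zero>\<^bsub>A\<^esub>"
  by (simp add: scal_def smon_zero)

lemma scal_one: "scal \<one> = \<one>\<^bsub>A\<^esub>"
  using qword_Nil by (simp add: scal_def qword_def mon_eq_smon)

end

section \<open>The subring \<open>(L\<^sub>R(E))\<^sub>0\<close>\<close>

locale lpa_NE = lpa +
  assumes NE: "condition_NE E1 s r"
begin

definition short_pairs where
  "short_pairs = {(p, q). gp p \<and> gp q \<and> length (snd p) = length (snd q) \<and> length (snd p) \<le> card E0}"

lemma finite_short_pairs: "finite short_pairs"
proof -
  define P where "P = E0 \<times> {es. set es \<subseteq> E1 \<and> length es \<le> card E0}"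
  have "finite P" unfolding P_def using finite_E0 finite_lists_length_le[OF finite_E1] by simp
  moreover have "short_pairs \<subseteq> P \<times> P"
    using gpath_fst_in gpath_edges_in by (fastforce simp: short_pairs_def P_def)
  ultimately show ?thesis by (meson finite_SigmaI finite_subset)
qed

definition combo where
  "combo c = (\<Oplus>\<^bsub>A\<^esub>m\<in>short_pairs. scal (c m) \<otimes>\<^bsub>A\<^esub> path_ghost (fst m) (snd m))"

abbreviation "V \<equiv> vectors R short_pairs"

definition L0 where
  "L0 = combo ` V"

lemma combo_carrier: "c \<in> V \<Longrightarrow> combo c \<in> carrier A"
  unfolding combo_def by (intro A.finsum_closed) (auto simp: vectors_carrier)

lemma combo_add: "c \<in> V \<Longrightarrow> d \<in> V \<Longrightarrow> combo (\<lambda>m. c m \<oplus> d m) = combo c \<oplus>\<^bsub>A\<^esub> combo d"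
proof -
  assume c: "c \<in> V" and d: "d \<in> V"
  have "combo (\<lambda>m. c m \<oplus> d m) = (\<Oplus>\<^bsub>A\<^esub>m\<in>short_pairs. scal (c m) \<otimes>\<^bsub>A\<^esub> path_ghost (fst m) (snd m)
      \<oplus>\<^bsub>A\<^esub> scal (d m) \<otimes>\<^bsub>A\<^esub> path_ghost (fst m) (snd m))"
    unfolding combo_def
    by (rule A.finsum_cong') (auto simp: scal_add vectors_carrier[OF c] vectors_carrier[OF d] A.l_distr)
  also have "\<dots> = combo c \<oplus>\<^bsub>A\<^esub> combo d"
    unfolding combo_def
    by (rule A.finsum_addf) (auto simp: vectors_carrier[OF c] vectors_carrier[OF d])
  finally show ?thesis .
qed

lemma combo_zero: "combo (\<lambda>_. \<zero>) = \<zero>\<^bsub>A\<^esub>"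
  unfolding combo_def by (simp add: scal_zero)

lemma combo_neg: "c \<in> V \<Longrightarrow> combo (\<lambda>m. \<ominus> c m) = \<ominus>\<^bsub>A\<^esub> combo c"
proof -
  assume c: "c \<in> V"
  have neg: "(\<lambda>m. \<ominus> c m) \<in> V" using c by (auto simp: vectors_def)
  have "combo (\<lambda>m. \<ominus> c m) \<oplus>\<^bsub>A\<^esub> combo c = \<zero>\<^bsub>A\<^esub>"
    using combo_add[OF neg c] vectors_carrier[OF c] by (simp add: l_neg combo_zero)
  then show ?thesis using combo_carrier[OF neg] combo_carrier[OF c] by (intro A.minus_equality[symmetric])
qed

lemma combo_lmult:
  assumes a: "a \<in> carrier R" and c: "c \<in> V"
  shows "combo (\<lambda>m. a \<otimes> c m) = scal a \<otimes>\<^bsub>A\<^esub> combo c"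
proof -
  have "scal a \<otimes>\<^bsub>A\<^esub> combo c
      = (\<Oplus>\<^bsub>A\<^esub>m\<in>short_pairs. scal a \<otimes>\<^bsub>A\<^esub> (scal (c m) \<otimes>\<^bsub>A\<^esub> path_ghost (fst m) (snd m)))"
    unfolding combo_def by (rule A.finsum_rdistr) (auto simp: finite_short_pairs a vectors_carrier[OF c])
  also have "\<dots> = combo (\<lambda>m. a \<otimes> c m)"
    unfolding combo_def
    by (rule A.finsum_cong') (auto simp: a vectors_carrier[OF c] scal_mult A.m_assoc)
  finally show ?thesis by simp
qed

lemma combo_rmult:
  assumes a: "a \<in> carrier R" and c: "c \<in> V"
  shows "combo (\<lambda>m. c m \<otimes> a) = combo c \<otimes>\<^bsub>A\<^esub> scal a"
proof -
  have "combo c \<otimes>\<^bsub>A\<^esub> scal a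
      = (\<Oplus>\<^bsub>A\<^esub>m\<in>short_pairs. scal (c m) \<otimes>\<^bsub>A\<^esub> path_ghost (fst m) (snd m) \<otimes>\<^bsub>A\<^esub> scal a)"
    unfolding combo_def by (rule A.finsum_ldistr) (auto simp: finite_short_pairs a vectors_carrier[OF c])
  also have "\<dots> = combo (\<lambda>m. c m \<otimes> a)"
    unfolding combo_def
    by (rule A.finsum_cong')
       (auto simp: a vectors_carrier[OF c] scal_mult A.m_assoc scal_path_ghost_comm[OF a, symmetric])
  finally show ?thesis by simp
qed

lemma L0_carrier: "L0 \<subseteq> carrier A"
  by (auto simp: L0_def combo_carrier)

lemma L0_zero: "\<zero>\<^bsub>A\<^esub> \<in> L0"
  using combo_zero by (force simp: L0_def vectors_def)

lemma L0_add: "x \<in> L0 \<Longrightarrow> y \<in> L0 \<Longrightarrow> x \<oplus>\<^bsub>A\<^esub> y \<in> L0"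
proof -
  assume "x \<in> L0" "y \<in> L0"
  then obtain c d where c: "c \<in> V" "x = combo c" and d: "d \<in> V" "y = combo d" by (auto simp: L0_def)
  have "(\<lambda>m. c m \<oplus> d m) \<in> V" using c(1) d(1) by (auto simp: vectors_def)
  then show ?thesis unfolding L0_def by (rule rev_image_eqI) (simp add: combo_add c d)
qed

lemma L0_neg: "x \<in> L0 \<Longrightarrow> \<ominus>\<^bsub>A\<^esub> x \<in> L0"
proof -
  assume "x \<in> L0"
  then obtain c where c: "c \<in> V" "x = combo c" by (auto simp: L0_def)
  have "(\<lambda>m. \<ominus> c m) \<in> V" using c(1) by (auto simp: vectors_def)
  then show ?thesis unfolding L0_def by (rule rev_image_eqI) (simp add: combo_neg c)
qed

lemma L0_finsum: "finite B \<Longrightarrow> (\<And>i. i \<in> B \<Longrightarrow> f i \<in> L0) \<Longrightarrow> (\<Oplus>\<^bsub>A\<^esub>i\<in>B. f i) \<in> L0"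
proof (induction B rule: finite_induct)
  case (insert b B)
  then have "f \<in> insert b B \<rightarrow> carrier A" using L0_carrier by blast
  then show ?case using insert by (simp add: A.finsum_insert L0_add)
qed (simp add: L0_zero)

lemma scal_path_ghost_in_L0:
  assumes c: "c \<in> carrier R" and "gp a" "gp b" "length (snd a) = length (snd b)"
  shows "scal c \<otimes>\<^bsub>A\<^esub> path_ghost a b \<in> L0"
proof -
  from path_ghost_bounded[OF NE assms(2-4)]
  consider "path_ghost a b = \<zero>\<^bsub>A\<^esub>" | a' b' where "gp a'" "gp b'" "length (snd a') = length (snd b')"
      "length (snd a') \<le> card E0" "path_ghost a b = path_ghost a' b'"
    by blast
  then show ?thesis
  proof cases
    case 1
    then show ?thesis using c L0_zero by simp
  next
    case (2 a' b')
    have m: "(a', b') \<in> short_pairs" using 2 by (simp add: short_pairs_def)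
    define d where "d m = (if m = (a', b') then c else \<zero>)" for m
    have d: "d \<in> V" using m c by (auto simp: d_def vectors_def)
    have "combo d = scal c \<otimes>\<^bsub>A\<^esub> path_ghost a' b'"
      unfolding combo_def
      by (subst A.finsum_eq_single[OF m]) (use c finite_short_pairs in \<open>auto simp: d_def scal_zero\<close>)
    then have "scal c \<otimes>\<^bsub>A\<^esub> path_ghost a b = combo d" using 2(5) by simp
    then show ?thesis using d by (simp add: L0_def)
  qed
qed

lemma scal_in_L0: "c \<in> carrier R \<Longrightarrow> scal c \<in> L0"
proof -
  assume c: "c \<in> carrier R"
  have "scal c = scal c \<otimes>\<^bsub>A\<^esub> (\<Oplus>\<^bsub>A\<^esub>v\<in>E0. vx v)" using c by (simp add: rel_unit[symmetric])
  also have "\<dots> = (\<Oplus>\<^bsub>A\<^esub>v\<in>E0. scal c \<otimes>\<^bsub>A\<^esub> vx v)"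
    by (rule A.finsum_rdistr) (auto simp: finite_E0 c)
  also have "\<dots> = (\<Oplus>\<^bsub>A\<^esub>v\<in>E0. scal c \<otimes>\<^bsub>A\<^esub> path_ghost (v, []) (v, []))"
    by (rule A.finsum_cong')
       (auto simp: c rel_V path_ghost_def path_elt_def ghost_elt_def edge_prod_Nil ghost_prod_Nil)
  also have "\<dots> \<in> L0"
    using c by (intro L0_finsum finite_E0 scal_path_ghost_in_L0) (auto simp: gpath_vertex)
  finally show ?thesis .
qed

lemma scal_path_ghost_mult_in_L0:
  assumes c: "c \<in> carrier R" and d: "d \<in> carrier R" and m: "m \<in> short_pairs" "m' \<in> short_pairs"
  shows "(scal c \<otimes>\<^bsub>A\<^esub> path_ghost (fst m) (snd m)) \<otimes>\<^bsub>A\<^esub> (scal d \<otimes>\<^bsub>A\<^esub> path_ghost (fst m') (snd m')) \<in> L0"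
proof -
  have "(scal c \<otimes>\<^bsub>A\<^esub> path_ghost (fst m) (snd m)) \<otimes>\<^bsub>A\<^esub> (scal d \<otimes>\<^bsub>A\<^esub> path_ghost (fst m') (snd m'))
      = scal c \<otimes>\<^bsub>A\<^esub> (path_ghost (fst m) (snd m) \<otimes>\<^bsub>A\<^esub> scal d) \<otimes>\<^bsub>A\<^esub> path_ghost (fst m') (snd m')"
    using c d by (simp add: A.m_assoc)
  also have "\<dots> = scal (c \<otimes> d) \<otimes>\<^bsub>A\<^esub> (path_ghost (fst m) (snd m) \<otimes>\<^bsub>A\<^esub> path_ghost (fst m') (snd m'))"
    using c d by (simp add: scal_path_ghost_comm[OF d, symmetric] A.m_assoc scal_mult)
  finally have eq: "(scal c \<otimes>\<^bsub>A\<^esub> path_ghost (fst m) (snd m)) \<otimes>\<^bsub>A\<^esub> (scal d \<otimes>\<^bsub>A\<^esub> path_ghost (fst m') (snd m'))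
      = scal (c \<otimes> d) \<otimes>\<^bsub>A\<^esub> (path_ghost (fst m) (snd m) \<otimes>\<^bsub>A\<^esub> path_ghost (fst m') (snd m'))" .
  from path_ghost_mult_cases[of "fst m" "snd m" "fst m'" "snd m'"] m
  consider (zero) "path_ghost (fst m) (snd m) \<otimes>\<^bsub>A\<^esub> path_ghost (fst m') (snd m') = \<zero>\<^bsub>A\<^esub>"
    | (pg) a b where "gp a" "gp b" "length (snd a) = length (snd b)"
      "path_ghost (fst m) (snd m) \<otimes>\<^bsub>A\<^esub> path_ghost (fst m') (snd m') = path_ghost a b"
    by (auto simp: short_pairs_def)
  then show ?thesis
  proof cases
    case zero
    then show ?thesis using eq c d L0_zero by simp
  next
    case (pg a b)
    then show ?thesis using eq c d scal_path_ghost_in_L0[of "c \<otimes> d" a b] by simp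
  qed
qed

lemma L0_mult: "x \<in> L0 \<Longrightarrow> y \<in> L0 \<Longrightarrow> x \<otimes>\<^bsub>A\<^esub> y \<in> L0"
proof -
  assume "x \<in> L0" "y \<in> L0"
  then obtain c d where c: "c \<in> V" "x = combo c" and d: "d \<in> V" "y = combo d" by (auto simp: L0_def)
  note cd = vectors_carrier[OF c(1)] vectors_carrier[OF d(1)]
  have "x \<otimes>\<^bsub>A\<^esub> y = (\<Oplus>\<^bsub>A\<^esub>m\<in>short_pairs. (scal (c m) \<otimes>\<^bsub>A\<^esub> path_ghost (fst m) (snd m)) \<otimes>\<^bsub>A\<^esub> combo d)"
    unfolding c(2) d(2) combo_def[of c] using combo_carrier[OF d(1)]
    by (intro A.finsum_ldistr) (auto simp: finite_short_pairs cd)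
  also have "\<dots> \<in> L0"
  proof (intro L0_finsum finite_short_pairs)
    fix m assume m: "m \<in> short_pairs"
    have "(scal (c m) \<otimes>\<^bsub>A\<^esub> path_ghost (fst m) (snd m)) \<otimes>\<^bsub>A\<^esub> combo d
      = (\<Oplus>\<^bsub>A\<^esub>m'\<in>short_pairs. (scal (c m) \<otimes>\<^bsub>A\<^esub> path_ghost (fst m) (snd m))
          \<otimes>\<^bsub>A\<^esub> (scal (d m') \<otimes>\<^bsub>A\<^esub> path_ghost (fst m') (snd m')))"
      unfolding combo_def[of d] by (intro A.finsum_rdistr) (auto simp: finite_short_pairs cd)
    also have "\<dots> \<in> L0" using m by (intro L0_finsum finite_short_pairs scal_path_ghost_mult_in_L0 cd)
    finally show "(scal (c m) \<otimes>\<^bsub>A\<^esub> path_ghost (fst m) (snd m)) \<otimes>\<^bsub>A\<^esub> combo d \<in> L0" .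
  qed
  finally show ?thesis .
qed

lemma L0_subring: "subring L0 A"
  by (rule A.subringI) (auto simp: L0_carrier scal_one[symmetric] scal_in_L0 L0_neg L0_mult L0_add)

lemma LPA0_carrier_subset_L0: "LPA0_carrier R E0 E1 s r \<subseteq> L0"
proof
  fix x assume "x \<in> LPA0_carrier R E0 E1 s r"
  then obtain y where x: "x = proj y" and y: "y \<in> carrier F"
    and supp: "\<And>w. y w \<noteq> \<zero> \<Longrightarrow> \<exists>\<alpha> \<beta>. gp \<alpha> \<and> gp \<beta> \<and> length (snd \<alpha>) = length (snd \<beta>)
                  \<and> w = path_word \<alpha> @ ghost_word \<beta>"
    unfolding LPA0_carrier_def proj_def by blast
  note yc = free_alg_carrierD[OF y]
  have "proj y = (\<Oplus>\<^bsub>A\<^esub>u\<in>{u. y u \<noteq> \<zero>}. proj (smon R (y u) u))"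
    using P.hom_finsum[of "\<lambda>u. smon R (y u) u" "{u. y u \<noteq> \<zero>}"] free_alg_smon_expansion[OF y]
    by (simp add: yc smon_carrier Pi_def o_def)
  also have "\<dots> \<in> L0"
  proof (intro L0_finsum yc(2))
    fix u assume "u \<in> {u. y u \<noteq> \<zero>}"
    then obtain \<alpha> \<beta> where ab: "gp \<alpha>" "gp \<beta>" "length (snd \<alpha>) = length (snd \<beta>)"
      and u: "u = path_word \<alpha> @ ghost_word \<beta>" using supp by blast
    have "proj (smon R (y u) u) = scal (y u) \<otimes>\<^bsub>A\<^esub> path_ghost \<alpha> \<beta>"
      using ab by (simp add: proj_smon yc u qword_append path_elt_eq_qword ghost_elt_eq_qword path_ghost_def)
    then show "proj (smon R (y u) u) \<in> L0" using scal_path_ghost_in_L0[OF yc(1) ab] by simp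
  qed
  finally show "x \<in> L0" using x by simp
qed

lemma L0_subset_LPA0_carrier: "L0 \<subseteq> LPA0_carrier R E0 E1 s r"
proof
  fix x assume "x \<in> L0"
  then obtain c where c: "c \<in> V" and x: "x = combo c" by (auto simp: L0_def)
  note cc = vectors_carrier[OF c]
  define y where "y = (\<Oplus>\<^bsub>F\<^esub>m\<in>short_pairs. smon R (c m) (path_word (fst m) @ ghost_word (snd m)))"
  have y: "y \<in> carrier F" unfolding y_def by (intro F.finsum_closed) (auto simp: cc smon_carrier)
  have "proj y = (\<Oplus>\<^bsub>A\<^esub>m\<in>short_pairs. proj (smon R (c m) (path_word (fst m) @ ghost_word (snd m))))"
    unfolding y_def using P.hom_finsum[of "\<lambda>m. smon R (c m) (path_word (fst m) @ ghost_word (snd m))" short_pairs]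
    by (simp add: cc smon_carrier Pi_def o_def)
  also have "\<dots> = x"
    unfolding x combo_def
    by (rule A.finsum_cong')
       (auto simp: cc short_pairs_def proj_smon qword_append path_elt_eq_qword
         ghost_elt_eq_qword path_ghost_def)
  finally have "x = proj y" ..
  moreover have "\<exists>\<alpha> \<beta>. gp \<alpha> \<and> gp \<beta> \<and> length (snd \<alpha>) = length (snd \<beta>) \<and> w = path_word \<alpha> @ ghost_word \<beta>"
    if nz: "y w \<noteq> \<zero>" for w
  proof -
    have "y w = (\<Oplus>m\<in>short_pairs. smon R (c m) (path_word (fst m) @ ghost_word (snd m)) w)"
      unfolding y_def by (rule free_alg_finsum_apply) (auto simp: finite_short_pairs cc smon_carrier)
    then obtain m where m: "m \<in> short_pairs" "w = path_word (fst m) @ ghost_word (snd m)"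
      using nz add.finprod_one_eqI[of short_pairs "\<lambda>m. smon R (c m) (path_word (fst m) @ ghost_word (snd m)) w"]
      by (force simp: smon_def)
    then show ?thesis by (intro exI[of _ "fst m"] exI[of _ "snd m"]) (auto simp: short_pairs_def)
  qed
  ultimately show "x \<in> LPA0_carrier R E0 E1 s r"
    unfolding LPA0_carrier_def proj_def using y by blast
qed

lemma LPA0_carrier_eq: "LPA0_carrier R E0 E1 s r = L0"
  using LPA0_carrier_subset_L0 L0_subset_LPA0_carrier by blast

lemma LPA0_ring: "ring (LPA0 R E0 E1 s r)"
  unfolding LPA0_def LPA0_carrier_eq by (rule A.subring_is_ring[OF L0_subring])

lemma LPA0_simps:
  "carrier (LPA0 R E0 E1 s r) = L0" "mult (LPA0 R E0 E1 s r) = mult A"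
  "add (LPA0 R E0 E1 s r) = add A" "zero (LPA0 R E0 E1 s r) = zero A"
  by (simp_all add: LPA0_def LPA0_carrier_eq)

lemma LPA0_a_inv: "x \<in> L0 \<Longrightarrow> a_inv (LPA0 R E0 E1 s r) x = \<ominus>\<^bsub>A\<^esub> x"
proof -
  assume x: "x \<in> L0"
  interpret L: ring "LPA0 R E0 E1 s r" by (rule LPA0_ring)
  have "a_inv (LPA0 R E0 E1 s r) x \<in> L0" "a_inv (LPA0 R E0 E1 s r) x \<oplus>\<^bsub>A\<^esub> x = \<zero>\<^bsub>A\<^esub>"
    using L.a_inv_closed[of x] L.l_neg[of x] x by (simp_all add: LPA0_simps)
  then show ?thesis using x L0_carrier by (intro A.minus_equality[symmetric]) auto
qed

text \<open>Used with \<open>\<mu>\<close> and \<open>\<nu>\<close> both left or both right multiplication: an ideal of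
  \<open>(L\<^sub>R(E))\<^sub>0\<close> pulls back along the surjection \<open>combo\<close> to a submodule of \<open>R\<^sup>n\<close>.\<close>

lemma LPA0_acc:
  assumes acc: "ascending_chain_condition (act_ideal R \<mu>)"
    and \<mu>: "\<And>a x. a \<in> carrier R \<Longrightarrow> x \<in> carrier R \<Longrightarrow> \<mu> a x \<in> carrier R"
    and \<mu>0: "\<And>a. a \<in> carrier R \<Longrightarrow> \<mu> a \<zero> = \<zero>"
    and combo_act: "\<And>a c. a \<in> carrier R \<Longrightarrow> c \<in> V \<Longrightarrow> combo (\<lambda>m. \<mu> a (c m)) = \<nu> (scal a) (combo c)"
  shows "ascending_chain_condition (act_ideal (LPA0 R E0 E1 s r) \<nu>)"
proof (rule ascending_chain_conditionI)
  fix C assume C: "\<And>n. act_ideal (LPA0 R E0 E1 s r) \<nu> (C n)" and mono: "\<And>n. C n \<subseteq> C (Suc n)"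
  have sub: "additive_subgroup (C n) (LPA0 R E0 E1 s r)" for n using C by (simp add: act_ideal_def)
  have CL0: "C n \<subseteq> L0" for n using additive_subgroup.a_subset[OF sub] by (simp add: LPA0_simps)
  define D where "D n = {c \<in> V. combo c \<in> C n}" for n
  have "act_submodule R \<mu> short_pairs (D n)" for n
    unfolding act_submodule_def
  proof (intro conjI ballI)
    show "D n \<subseteq> V" by (auto simp: D_def)
    show "(\<lambda>_. \<zero>) \<in> D n"
      using additive_subgroup.zero_closed[OF sub] by (simp add: D_def vectors_def combo_zero LPA0_simps)
  next
    fix c d assume "c \<in> D n" "d \<in> D n"
    then show "(\<lambda>m. c m \<oplus> d m) \<in> D n"
      using additive_subgroup.a_closed[OF sub] by (auto simp: D_def vectors_def combo_add LPA0_simps)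
  next
    fix c assume "c \<in> D n"
    then have c: "c \<in> V" "combo c \<in> C n" by (auto simp: D_def)
    then have "\<ominus>\<^bsub>A\<^esub> combo c \<in> C n"
      using additive_subgroup.a_inv_closed[OF sub] CL0 LPA0_a_inv by (metis LPA0_simps(1) subsetD)
    moreover have "(\<lambda>m. \<ominus> c m) \<in> V" using c(1) by (auto simp: vectors_def)
    ultimately show "(\<lambda>m. \<ominus> c m) \<in> D n" using c(1) by (simp add: D_def combo_neg)
  next
    fix a c assume "a \<in> carrier R" "c \<in> D n"
    then show "(\<lambda>m. \<mu> a (c m)) \<in> D n"
      using C[of n] scal_in_L0 \<mu> \<mu>0 vectors_carrier
      by (auto simp: D_def vectors_def combo_act act_ideal_def LPA0_simps)
  qed
  moreover have "D n \<subseteq> D (Suc n)" for n using mono by (auto simp: D_def)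
  ultimately obtain N where N: "\<forall>n\<ge>N. D n = D N"
    using ascending_chain_conditionD[OF acc_act_submodules[OF finite_short_pairs \<mu>0 acc]] by blast
  have "C n = combo ` D n" for n using CL0[of n] by (auto simp: D_def L0_def)
  then show "\<exists>N. \<forall>n\<ge>N. C n = C N" using N by metis
qed

lemma LPA0_left_noetherian: "left_noetherian R \<Longrightarrow> left_noetherian (LPA0 R E0 E1 s r)"
  unfolding left_noetherian_iff
  by (auto simp: LPA0_ring LPA0_simps combo_lmult intro!: LPA0_acc)

lemma LPA0_right_noetherian: "right_noetherian R \<Longrightarrow> right_noetherian (LPA0 R E0 E1 s r)"
  unfolding right_noetherian_iff
  by (auto simp: LPA0_ring LPA0_simps combo_rmult intro!: LPA0_acc)

end

theorem corollary4p6: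
  fixes R :: "('r, 'm) ring_scheme"
    and E0 :: "'v set" and E1 :: "'e set" and s r :: "'e \<Rightarrow> 'v"
  assumes "finite_graph E0 E1 s r"
    and "condition_NE E1 s r"
  shows "(left_noetherian R \<longrightarrow> left_noetherian (LPA0 R E0 E1 s r))
       \<and> (right_noetherian R \<longrightarrow> right_noetherian (LPA0 R E0 E1 s r))"
proof -
  have "lpa_NE R E0 E1 s r" if "ring R"
    using that assms by (intro lpa_NE.intro lpa.intro lpa_NE_axioms.intro lpa_axioms.intro)
  then show ?thesis
    using lpa_NE.LPA0_left_noetherian lpa_NE.LPA0_right_noetherian
    by (metis left_noetherian_def right_noetherian_def)
qed

end
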